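(* Let $T_1$ and $T_2$ be two tilings of a simply connected $2$-dimensional cubiculated region $R$ such that $T_1\cup T_2$ is a collection of perimeter cycles $\mathcal{C}_1,\dots,\mathcal{C}_r$. Then there exist a sequence of flip moves $(D_{1_1},D_{2_1}),\dots,(D_{1_s},D_{2_s})$ taking $T_1$ to a tiling $T_1'$ and a sequence of flip moves $(D'_{1_1},D'_{2_1}),\dots,(D'_{1_t},D'_{2_t})$ taking $T_2$ to a tiling $T_2'$ such that $T_1'\cup T_2'$ is a collection of contractible cycles. In particular, writing $P_0=T_1$, $P_i=(P_{i-1}\setminus D_{1_i})\cup D_{2_i}$ (so $P_s=T_1'$) and $Q_0=T_2$, $Q_j=(Q_{j-1}\setminus D'_{1_j})\cup D'_{2_j}$ (so $Q_t=T_2'$), one has $$B_{T_1,T_2}=\sum_{i=1}^{s} y^{P_{i-1}\setminus D_{1_i}}\big(y^{D_{1_i}}-y^{D_{2_i}}\big)+B_{T_1',T_2'}+\sum_{j=1}^{t} y^{Q_{j-1}\setminus D'_{1_j}}\big(y^{D'_{2_j}}-y^{D'_{1_j}}\big),$$ where each binomial $y^{D_{1_i}}-y^{D_{2_i}}$ and $y^{D'_{2_j}}-y^{D'_{1_j}}$ has degree $2$.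
   Context: A $2$-dimensional cubiculated region $R$ is a finite union of unit lattice squares in the plane; it is simply connected if it has no holes (every simple closed curve in it can be shrunk to a point within it). A domino is two squares of $R$ sharing an edge; a tiling is a set of dominoes covering every square exactly once. $G_R$ has a vertex for each square (drawn at its center, so $G_R$ is drawn in the plane as a subgraph of the integer grid graph) and an edge between squares sharing an edge; tilings are perfect matchings. $T_1\cup T_2$ denotes the multigraph union, a disjoint union of even cycles covering all vertices, where an edge in both tilings forms a $2$-cycle. A flip move $(D_1,D_2)$ on a tiling replaces two dominoes $D_1$ forming a $2\times 2$ square by the two perpendicular dominoes $D_2$ covering the same square. A cycle of $G_R$ (or of $T_1\cup T_2$) is contractible if, in the planar drawing, its interior contains no vertices of $G_R$; $2$-cycles are contractible. A cycle of $T_1\cup T_2$ is a perimeter cycle if its interior contains no cycles of $T_1\cup T_2$ other than (possibly) $2$-cycles. In $\mathbb{K}[y_e : e\in E(G_R)]$, $y^{E_0}=\prod_{e\in E_0}y_e$ and $B_{T_1,T_2}=y^{T_1}-y^{T_2}$. *)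

theory Defs
  imports "HOL-Analysis.Analysis" "HOL-Library.Poly_Mapping"
begin

type_synonym square = "int \<times> int"
type_synonym edge = "square set"

definition center :: "square \<Rightarrow> real \<times> real" where
  "center p = (real_of_int (fst p), real_of_int (snd p))"

definition unit_sq :: "square \<Rightarrow> (real \<times> real) set" where
  "unit_sq p = cbox (center p - (1/2, 1/2)) (center p + (1/2, 1/2))"

definition region_set :: "square set \<Rightarrow> (real \<times> real) set" where
  "region_set R = (\<Union>p\<in>R. unit_sq p)"

definition simply_connected_region :: "square set \<Rightarrow> bool" where
  "simply_connected_region R \<longleftrightarrow> finite R \<and>
     (\<forall>g. path g \<and> pathfinish g = pathstart g \<and> path_image g \<subseteq> region_set R \<longrightarrow>
          homotopic_loops (region_set R) g (linepath (pathstart g) (pathstart g)))"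

definition adjacent :: "square \<Rightarrow> square \<Rightarrow> bool" where
  "adjacent p q \<longleftrightarrow> \<bar>fst p - fst q\<bar> + \<bar>snd p - snd q\<bar> = 1"

definition grid_edges :: "square set \<Rightarrow> edge set" where
  "grid_edges R = {{p, q} | p q. p \<in> R \<and> q \<in> R \<and> adjacent p q}"

definition is_tiling :: "square set \<Rightarrow> edge set \<Rightarrow> bool" where
  "is_tiling R T \<longleftrightarrow> T \<subseteq> grid_edges R \<and> (\<forall>p\<in>R. \<exists>!e. e \<in> T \<and> p \<in> e)"

text \<open>Cycles of the union T1 \<union> T2 = connected components (vertex sets) of the graph on R
  with edge set T1 \<union> T2 (an edge in both tilings gives a 2-cycle).\<close>
definition comp_of :: "edge set \<Rightarrow> square \<Rightarrow> square set" where
  "comp_of E p = {q. (\<lambda>a b. {a, b} \<in> E)\<^sup>*\<^sup>* p q}"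

definition union_cycles :: "square set \<Rightarrow> edge set \<Rightarrow> edge set \<Rightarrow> square set set" where
  "union_cycles R T1 T2 = comp_of (T1 \<union> T2) ` R"

definition drawing :: "edge set \<Rightarrow> square set \<Rightarrow> (real \<times> real) set" where
  "drawing E V = \<Union>{closed_segment (center p) (center q) | p q. {p, q} \<in> E \<and> p \<in> V \<and> q \<in> V}"

definition cycle_interior :: "edge set \<Rightarrow> square set \<Rightarrow> (real \<times> real) set" where
  "cycle_interior E V = inside (drawing E V)"

definition contractible_cycle :: "square set \<Rightarrow> edge set \<Rightarrow> square set \<Rightarrow> bool" where
  "contractible_cycle R E V \<longleftrightarrow> (\<forall>p\<in>R. center p \<notin> cycle_interior E V)"

definition perimeter_cycle :: "square set \<Rightarrow> edge set \<Rightarrow> edge set \<Rightarrow> square set \<Rightarrow> bool" where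
  "perimeter_cycle R T1 T2 V \<longleftrightarrow>
     (\<forall>W\<in>union_cycles R T1 T2. W \<noteq> V \<and> card W \<noteq> 2 \<longrightarrow>
        \<not> (drawing (T1 \<union> T2) W \<subseteq> cycle_interior (T1 \<union> T2) V))"

definition hdom :: "int \<Rightarrow> int \<Rightarrow> edge set" where
  "hdom a b = {{(a, b), (a + 1, b)}, {(a, b + 1), (a + 1, b + 1)}}"

definition vdom :: "int \<Rightarrow> int \<Rightarrow> edge set" where
  "vdom a b = {{(a, b), (a, b + 1)}, {(a + 1, b), (a + 1, b + 1)}}"

definition flip_move :: "edge set \<Rightarrow> edge set \<Rightarrow> edge set \<Rightarrow> bool" where
  "flip_move T D1 D2 \<longleftrightarrow> D1 \<subseteq> T \<and>
     (\<exists>a b. (D1 = hdom a b \<and> D2 = vdom a b) \<or> (D1 = vdom a b \<and> D2 = hdom a b))"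

fun flip_seq :: "edge set \<Rightarrow> (nat \<Rightarrow> edge set) \<Rightarrow> (nat \<Rightarrow> edge set) \<Rightarrow> nat \<Rightarrow> edge set" where
  "flip_seq T D1 D2 0 = T"
| "flip_seq T D1 D2 (Suc i) = (flip_seq T D1 D2 i - D1 (Suc i)) \<union> D2 (Suc i)"

definition valid_flips :: "edge set \<Rightarrow> (nat \<Rightarrow> edge set) \<Rightarrow> (nat \<Rightarrow> edge set) \<Rightarrow> nat \<Rightarrow> bool" where
  "valid_flips T D1 D2 s \<longleftrightarrow> (\<forall>i\<in>{1..s}. flip_move (flip_seq T D1 D2 (i - 1)) (D1 i) (D2 i))"

text \<open>Polynomial ring K[y_e] as finitely supported maps from monomials to K.\<close>
type_synonym 'k epoly = "(edge \<Rightarrow>\<^sub>0 nat) \<Rightarrow>\<^sub>0 'k"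

definition yvar :: "edge \<Rightarrow> 'k::field epoly" where
  "yvar e = Poly_Mapping.single (Poly_Mapping.single e 1) 1"

definition ymon :: "edge set \<Rightarrow> 'k::field epoly" where
  "ymon E0 = (\<Prod>e\<in>E0. yvar e)"

definition Bpoly :: "edge set \<Rightarrow> edge set \<Rightarrow> 'k::field epoly" where
  "Bpoly T1 T2 = ymon T1 - ymon T2"

definition mon_degree :: "(edge \<Rightarrow>\<^sub>0 nat) \<Rightarrow> nat" where
  "mon_degree m = (\<Sum>e\<in>Poly_Mapping.keys m. Poly_Mapping.lookup m e)"

definition has_degree :: "'k::field epoly \<Rightarrow> nat \<Rightarrow> bool" where
  "has_degree f d \<longleftrightarrow> f \<noteq> 0 \<and> (\<forall>m\<in>Poly_Mapping.keys f. mon_degree m = d)"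

end

theory Submission
  imports Defs "HOL-Complex_Analysis.Riemann_Mapping"
begin

text \<open>
  Any two tilings of a simply connected region are connected by flips (Thurston), so \<open>T1\<close> and
  \<open>T2\<close> can be flipped to a common tiling \<open>T1' = T2'\<close>. Then \<open>T1' \<union> T2'\<close> consists of \<open>2\<close>-cycles,
  which are contractible, and the binomial identity telescopes along the two flip sequences.

  For flip connectivity, the height of a tiling \<open>T\<close> increases by \<open>\<plusminus>1\<close> along a lattice edge,
  or by \<open>\<mp>3\<close> if the edge crosses a domino of \<open>T\<close>; this form has zero curl on every square of the
  region. The difference of the forms of two tilings vanishes on edges outside the region, so it
  has a potential \<open>h\<^sub>T\<^sub>1 - h\<^sub>T\<^sub>2\<close> on the whole lattice, and by simple connectivity this potential
  vanishes at all corners of squares outside the region. At a corner where \<open>h\<^sub>T\<^sub>1 - h\<^sub>T\<^sub>2\<close> is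
  maximal and positive, no edge ascends for \<open>T1\<close>: a closed walk of ascending edges inside the
  maximal level set would have positive total increment, yet it winds around no square outside
  the region, so a discrete Stokes formula makes that total zero. The dominoes of \<open>T1\<close> around
  such a corner form a flippable \<open>2 \<times> 2\<close> block, and flipping it lowers \<open>h\<^sub>T\<^sub>1 - h\<^sub>T\<^sub>2\<close> by \<open>4\<close>
  at that corner only. Hence the \<open>\<ell>\<^sup>1\<close> distance of the two height functions decreases.
\<close>

section \<open>The complement of a simply connected region\<close>

lemma compact_region_set: "finite R \<Longrightarrow> compact (region_set R)"
  unfolding region_set_def unit_sq_def by (intro compact_UN) auto

lemma locally_path_connected_region_set: "finite R \<Longrightarrow> locally path_connected (region_set R)"
  unfolding region_set_def unit_sq_def
  by (intro ANR_imp_locally_path_connected ANR_finite_Union_convex_closed) auto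

lemma simply_connected_component:
  assumes loops: "\<And>g. path g \<Longrightarrow> pathfinish g = pathstart g \<Longrightarrow> path_image g \<subseteq> S \<Longrightarrow>
          homotopic_loops S g (linepath (pathstart g) (pathstart g))"
    and lpc: "locally path_connected S" and C: "C \<in> components S"
  shows "simply_connected C"
proof -
  have "path_connected C"
    using C lpc by (metis components_iff locally_path_connected_connected_component
        path_component_eq_connected_component_set path_connected_path_component)
  moreover have "homotopic_loops C p (linepath (pathstart p) (pathstart p))"
    if p: "path p" "path_image p \<subseteq> C" "pathfinish p = pathstart p" for p
  proof -
    have ps: "pathstart p \<in> C" using p pathstart_in_path_image by blast
    have "homotopic_loops S p (linepath (pathstart p) (pathstart p))"
      using loops p C in_components_subset by blast
    then obtain h where h: "continuous_on ({0..1::real} \<times> {0..1}) h"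
       "h \<in> ({0..1} \<times> {0..1}) \<rightarrow> S" "\<forall>x \<in> {0..1}. h(0,x) = p x"
       "\<forall>x \<in> {0..1}. h(1,x) = linepath (pathstart p) (pathstart p) x"
       "\<forall>t \<in> {0..1}. pathfinish(h \<circ> Pair t) = pathstart(h \<circ> Pair t)"
      unfolding homotopic_loops by blast
    have con: "connected (h ` ({0..1} \<times> {0..1}))"
      by (intro connected_continuous_image h(1) connected_Times) auto
    have h00: "h (0,0) = pathstart p" using h(3) by (simp add: pathstart_def)
    have "C = connected_component_set S (pathstart p)"
      using C ps by (metis components_iff connected_component_eq)
    then have "h ` ({0..1} \<times> {0..1}) \<subseteq> C"
      using con h00 h(2) by (simp only:) (rule connected_component_maximal; force)
    then show ?thesis unfolding homotopic_loops using h by blast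
  qed
  ultimately show ?thesis
    using simply_connected_eq_contractible_loop_some pathstart_in_path_image by blast
qed

lemma Borsukian_region_set:
  assumes "simply_connected_region R"
  shows "Borsukian (region_set R)"
proof (rule Borsukian_componentwise)
  have fin: "finite R" using assms simply_connected_region_def by blast
  then show "locally connected (region_set R) \<or> compact (region_set R)"
    using compact_region_set by blast
  fix C assume C: "C \<in> components (region_set R)"
  note lpc = locally_path_connected_region_set[OF fin]
  have "simply_connected C"
    by (rule simply_connected_component[OF _ lpc C])
       (use assms in \<open>auto simp: simply_connected_region_def\<close>)
  then show "Borsukian C"
    using simply_connected_imp_Borsukian locally_path_connected_components[OF lpc C] by blast
qed

text \<open>The Borsuk separation theorem is stated for subsets of \<^typ>\<open>complex\<close>, so the region is
  transported there by the linear isomorphism \<open>(x, y) \<mapsto> x + iy\<close>.\<close>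

lemma connected_Compl_region_set:
  assumes sc: "simply_connected_region R"
  shows "connected (- region_set R)"
proof -
  define f :: "real \<times> real \<Rightarrow> complex" where "f p = Complex (fst p) (snd p)" for p
  define g :: "complex \<Rightarrow> real \<times> real" where "g z = (Re z, Im z)" for z
  have lin: "linear f" unfolding f_def
    by (rule linearI) (auto simp: complex_eq_iff scaleR_conv_of_real)
  have bij: "bij f" by (rule bij_betw_byWitness[of _ g]) (auto simp: f_def g_def)
  have "compact (f ` region_set R)"
    using compact_region_set sc lin linear_continuous_on compact_continuous_image
    unfolding simply_connected_region_def by (metis linear_linear)
  moreover have "Borsukian (f ` region_set R)"
    using Borsukian_injective_linear_image[OF lin bij_is_inj[OF bij]] Borsukian_region_set[OF sc]
    by blast
  ultimately have "connected (f ` (- region_set R))"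
    using Borsukian_separation_compact bij_image_Compl_eq[OF bij] by metis
  then have "connected (g ` f ` (- region_set R))"
    by (rule connected_continuous_image[rotated]) (auto simp: g_def intro!: continuous_intros)
  moreover have "g ` f ` X = X" for X by (force simp: image_image f_def g_def)
  ultimately show ?thesis by simp
qed

section \<open>Squares outside the region\<close>

lemma mem_unit_sq: "z \<in> unit_sq c \<longleftrightarrow>
   real_of_int (fst c) - 1/2 \<le> fst z \<and> fst z \<le> real_of_int (fst c) + 1/2 \<and>
   real_of_int (snd c) - 1/2 \<le> snd z \<and> snd z \<le> real_of_int (snd c) + 1/2"
  by (cases c; cases z) (simp add: unit_sq_def center_def)

lemma center_in_unit_sq: "center c \<in> unit_sq c"
  by (simp add: mem_unit_sq center_def)

lemma center_in_unit_sq_imp_eq: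
  assumes "center c \<in> unit_sq c'" shows "c' = c"
proof -
  have "\<bar>real_of_int (fst c' - fst c)\<bar> < 1" "\<bar>real_of_int (snd c' - snd c)\<bar> < 1"
    using assms unfolding mem_unit_sq center_def by auto
  then have "fst c' - fst c = 0" "snd c' - snd c = 0"
    by (simp_all only: of_int_abs[symmetric] of_int_less_1_iff abs_less_iff) linarith+
  then show ?thesis by (simp add: prod_eq_iff)
qed

lemma region_set_iff: "z \<in> region_set R \<longleftrightarrow> (\<exists>c\<in>R. z \<in> unit_sq c)"
  unfolding region_set_def by auto

definition square_at :: "real \<times> real \<Rightarrow> square" where
  "square_at y = (\<lfloor>fst y + 1/2\<rfloor>, \<lfloor>snd y + 1/2\<rfloor>)"

lemma in_unit_sq_square_at: "y \<in> unit_sq (square_at y)"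
  unfolding mem_unit_sq square_at_def by simp linarith

lemma squares_near_point:
  "\<exists>e>0. \<forall>y c. dist y z < e \<longrightarrow> y \<in> unit_sq c \<longrightarrow> z \<in> unit_sq c"
proof -
  define N where "N = {c. real_of_int (fst c) \<le> fst z + 2 \<and> fst z \<le> real_of_int (fst c) + 2 \<and>
     real_of_int (snd c) \<le> snd z + 2 \<and> snd z \<le> real_of_int (snd c) + 2 \<and> z \<notin> unit_sq c}"
  have "N \<subseteq> {\<lfloor>fst z\<rfloor> - 3 .. \<lfloor>fst z\<rfloor> + 3} \<times> {\<lfloor>snd z\<rfloor> - 3 .. \<lfloor>snd z\<rfloor> + 3}"
    unfolding N_def by auto linarith+
  then have finN: "finite N" by (rule finite_subset) auto
  define e where "e = Min (insert 1 ((\<lambda>c. infdist z (unit_sq c)) ` N))"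
  have "infdist z (unit_sq c) > 0" if "c \<in> N" for c
    using that center_in_unit_sq[of c] unfolding N_def
    by (intro infdist_pos_not_in_closed) (auto simp: unit_sq_def)
  then have epos: "e > 0" unfolding e_def using finN by (subst Min_gr_iff) auto
  have ele1: "e \<le> 1" unfolding e_def using finN by (intro Min_le) auto
  have ele: "e \<le> infdist z (unit_sq c)" if "c \<in> N" for c
    unfolding e_def using finN that by (intro Min_le) auto
  show ?thesis
  proof (intro exI[of _ e] conjI allI impI epos)
    fix y c assume d: "dist y z < e" and y: "y \<in> unit_sq c"
    show "z \<in> unit_sq c"
    proof (rule ccontr)
      assume nz: "z \<notin> unit_sq c"
      have "\<bar>fst y - fst z\<bar> < 1" "\<bar>snd y - snd z\<bar> < 1"
        using dist_fst_le[of y z] dist_snd_le[of y z] d ele1 by (auto simp: dist_real_def)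
      then have "c \<in> N" using y nz unfolding N_def mem_unit_sq by auto
      then have "e \<le> infdist z (unit_sq c)" by (rule ele)
      also have "\<dots> \<le> dist z y" using y by (rule infdist_le)
      finally show False using d by (simp add: dist_commute)
    qed
  qed
qed

definition outer_adjacent :: "square set \<Rightarrow> square \<Rightarrow> square \<Rightarrow> bool" where
  "outer_adjacent R c c' \<longleftrightarrow> c \<notin> R \<and> c' \<notin> R \<and> adjacent c c'"

lemma outer_adjacent_sym: "outer_adjacent R a b \<Longrightarrow> outer_adjacent R b a"
  unfolding outer_adjacent_def adjacent_def by (simp add: abs_minus_commute)

lemma outer_adjacent_rtranclp_sym:
  "(outer_adjacent R)\<^sup>*\<^sup>* a b \<Longrightarrow> (outer_adjacent R)\<^sup>*\<^sup>* b a"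
proof (induction rule: rtranclp_induct)
  case (step y z)
  then show ?case by (meson converse_rtranclp_into_rtranclp outer_adjacent_sym)
qed simp

lemma outer_adjacent_common_point:
  assumes "z \<in> unit_sq c1" "z \<in> unit_sq c2" "z \<notin> region_set R"
  shows "(outer_adjacent R)\<^sup>*\<^sup>* c1 c2"
proof -
  obtain a1 b1 a2 b2 where c: "c1 = (a1,b1)" "c2 = (a2,b2)" by fastforce
  have out: "c1 \<notin> R" "c2 \<notin> R" "(a1,b2) \<notin> R"
    using assms region_set_iff unfolding c mem_unit_sq by fastforce+
  have "\<bar>real_of_int (a1 - a2)\<bar> < 2" "\<bar>real_of_int (b1 - b2)\<bar> < 2"
    using assms unfolding c mem_unit_sq by auto
  then have "\<bar>a1 - a2\<bar> \<le> 1" "\<bar>b1 - b2\<bar> \<le> 1" by linarith+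
  then have "(outer_adjacent R)\<^sup>=\<^sup>= (a1,b1) (a1,b2)" "(outer_adjacent R)\<^sup>=\<^sup>= (a1,b2) (a2,b2)"
    using out c by (auto simp: outer_adjacent_def adjacent_def)
  then show ?thesis using c by (auto intro: rtranclp_trans)
qed

lemma openin_outer_cluster:
  "openin (top_of_set (- region_set R))
     (- region_set R \<inter> (\<Union>p\<in>{c'. (outer_adjacent R)\<^sup>*\<^sup>* c c'}. unit_sq p))"
  (is "openin (top_of_set ?A) (?A \<inter> ?X)")
  unfolding openin_contains_ball
proof (intro conjI ballI)
  fix z assume z: "z \<in> ?A \<inter> ?X"
  obtain e where e: "e > 0" "\<And>y c. dist y z < e \<Longrightarrow> y \<in> unit_sq c \<Longrightarrow> z \<in> unit_sq c"
    using squares_near_point[of z] by blast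
  obtain c1 where c1: "(outer_adjacent R)\<^sup>*\<^sup>* c c1" "z \<in> unit_sq c1" using z by blast
  have "y \<in> ?A \<inter> ?X" if y: "y \<in> ball z e \<inter> ?A" for y
  proof -
    have "z \<in> unit_sq (square_at y)"
      using e(2)[OF _ in_unit_sq_square_at] y by (simp add: dist_commute)
    then have "(outer_adjacent R)\<^sup>*\<^sup>* c1 (square_at y)"
      using outer_adjacent_common_point[OF c1(2)] z by blast
    then have "(outer_adjacent R)\<^sup>*\<^sup>* c (square_at y)" using c1(1) by simp
    then show ?thesis using y in_unit_sq_square_at[of y] by blast
  qed
  then show "\<exists>e>0. ball z e \<inter> ?A \<subseteq> ?A \<inter> ?X" using e(1) by blast
qed blast

text \<open>The squares reachable from \<open>c\<close> outside the region cover a relatively clopen subset of the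
  complement of the region, which is connected by simple connectivity; hence they are unbounded.\<close>

lemma outer_component_unbounded:
  assumes sc: "simply_connected_region R" and c: "c \<notin> R"
  shows "\<exists>c'. (outer_adjacent R)\<^sup>*\<^sup>* c c' \<and> (\<bar>fst c'\<bar> > B \<or> \<bar>snd c'\<bar> > B)"
proof (rule ccontr)
  assume "\<not> ?thesis"
  then have "\<bar>fst c'\<bar> \<le> B" "\<bar>snd c'\<bar> \<le> B" if "(outer_adjacent R)\<^sup>*\<^sup>* c c'" for c'
    using that by (meson not_less)+
  then have "c' \<in> {-B..B} \<times> {-B..B}" if "(outer_adjacent R)\<^sup>*\<^sup>* c c'" for c'
    using that by (cases c') (fastforce simp: abs_le_iff)
  then have "{c'. (outer_adjacent R)\<^sup>*\<^sup>* c c'} \<subseteq> {-B..B} \<times> {-B..B}" by blast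
  then have finC: "finite {c'. (outer_adjacent R)\<^sup>*\<^sup>* c c'}" by (rule finite_subset) auto
  define X where "X = (\<Union>p\<in>{c'. (outer_adjacent R)\<^sup>*\<^sup>* c c'}. unit_sq p)"
  have Xc: "compact X" unfolding X_def unit_sq_def using finC by (intro compact_UN) auto
  define A where "A = - region_set R"
  have "closedin (top_of_set A) (A \<inter> X)"
    using Xc by (simp add: closedin_closed_Int compact_imp_closed)
  moreover have "openin (top_of_set A) (A \<inter> X)"
    unfolding A_def X_def by (rule openin_outer_cluster)
  moreover have "center c \<in> A \<inter> X"
  proof -
    have "center c \<notin> region_set R"
      using c center_in_unit_sq_imp_eq unfolding region_set_iff by blast
    then show ?thesis using center_in_unit_sq[of c] unfolding A_def X_def by blast
  qed
  moreover have "connected A" unfolding A_def by (rule connected_Compl_region_set[OF sc])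
  ultimately have "A \<inter> X = A" unfolding connected_clopen by blast
  then have "UNIV \<subseteq> X \<union> region_set R" unfolding A_def by blast
  moreover have "bounded (X \<union> region_set R)"
    using Xc compact_region_set sc by (simp add: compact_imp_bounded simply_connected_region_def)
  ultimately show False using bounded_subset not_bounded_UNIV by blast
qed

lemma outer_row_path:
  assumes "\<And>k. min a b \<le> k \<Longrightarrow> k \<le> max a b \<Longrightarrow> (k, y) \<notin> R"
  shows "(outer_adjacent R)\<^sup>*\<^sup>* (a, y) (b, y)"
proof -
  have "(outer_adjacent R)\<^sup>*\<^sup>* (a, y) (a + int m, y)"
    if "\<And>k. a \<le> k \<Longrightarrow> k \<le> a + int m \<Longrightarrow> (k, y) \<notin> R" for a m
    using that
  proof (induction m)
    case (Suc m)
    then have "outer_adjacent R (a + int m, y) (a + int (Suc m), y)"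
      by (auto simp: outer_adjacent_def adjacent_def)
    with Suc show ?case by (simp add: rtranclp.rtrancl_into_rtrancl)
  qed simp
  from this[of "min a b" "nat \<bar>b - a\<bar>"] show ?thesis
    using assms outer_adjacent_rtranclp_sym by (cases "a \<le> b") (auto simp: min_def max_def)
qed

lemma outer_column_path:
  assumes "\<And>k. min a b \<le> k \<Longrightarrow> k \<le> max a b \<Longrightarrow> (x, k) \<notin> R"
  shows "(outer_adjacent R)\<^sup>*\<^sup>* (x, a) (x, b)"
proof -
  have "(outer_adjacent R)\<^sup>*\<^sup>* (x, a) (x, a + int m)"
    if "\<And>k. a \<le> k \<Longrightarrow> k \<le> a + int m \<Longrightarrow> (x, k) \<notin> R" for a m
    using that
  proof (induction m)
    case (Suc m)
    then have "outer_adjacent R (x, a + int m) (x, a + int (Suc m))"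
      by (auto simp: outer_adjacent_def adjacent_def)
    with Suc show ?case by (simp add: rtranclp.rtrancl_into_rtrancl)
  qed simp
  from this[of "min a b" "nat \<bar>b - a\<bar>"] show ?thesis
    using assms outer_adjacent_rtranclp_sym by (cases "a \<le> b") (auto simp: min_def max_def)
qed

definition region_bound :: "square set \<Rightarrow> int" where
  "region_bound R = Max (insert 0 ((\<lambda>c. max \<bar>fst c\<bar> \<bar>snd c\<bar>) ` R))"

lemma region_bound:
  assumes "finite R" "c \<in> R"
  shows "\<bar>fst c\<bar> \<le> region_bound R" "\<bar>snd c\<bar> \<le> region_bound R"
proof -
  have "max \<bar>fst c\<bar> \<bar>snd c\<bar> \<le> region_bound R"
    unfolding region_bound_def using assms by (intro Max_ge) auto
  then show "\<bar>fst c\<bar> \<le> region_bound R" "\<bar>snd c\<bar> \<le> region_bound R" by simp_all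
qed

lemma region_bound_nonneg: "finite R \<Longrightarrow> 0 \<le> region_bound R"
  unfolding region_bound_def by (simp add: Max_ge)

lemma outer_square_reaches_left:
  assumes sc: "simply_connected_region R" and c: "c \<notin> R"
  shows "\<exists>c'. (outer_adjacent R)\<^sup>*\<^sup>* c c' \<and> fst c' < K"
proof -
  have fin: "finite R" using sc simply_connected_region_def by blast
  define B where "B = region_bound R"
  have out: "q \<notin> R" if "\<bar>fst q\<bar> > B \<or> \<bar>snd q\<bar> > B" for q
    using region_bound[OF fin, of q] that unfolding B_def by linarith
  have B: "0 \<le> B" using region_bound_nonneg[OF fin] unfolding B_def .
  obtain a b where c1: "(outer_adjacent R)\<^sup>*\<^sup>* c (a, b)" "\<bar>a\<bar> > B + \<bar>K\<bar> + 1 \<or> \<bar>b\<bar> > B + \<bar>K\<bar> + 1"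
    using outer_component_unbounded[OF sc c, of "B + \<bar>K\<bar> + 1"] by auto
  consider "\<bar>b\<bar> > B" | "a < 0" "\<bar>b\<bar> \<le> B" | "a > B"
    using c1(2) by linarith
  then show ?thesis
  proof cases
    case 1
    have "(outer_adjacent R)\<^sup>*\<^sup>* (a, b) (K - 1, b)"
      by (rule outer_row_path) (use out 1 in auto)
    then show ?thesis using c1(1) by (intro exI[of _ "(K - 1, b)"]) auto
  next
    case 2
    then show ?thesis using c1 by (intro exI[of _ "(a, b)"]) auto
  next
    case 3
    have "(outer_adjacent R)\<^sup>*\<^sup>* (a, b) (a, B + 1)"
      by (rule outer_column_path) (use out 3 in force)
    moreover have "(outer_adjacent R)\<^sup>*\<^sup>* (a, B + 1) (K - 1, B + 1)"
      by (rule outer_row_path) (use out B in auto)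
    ultimately show ?thesis using c1(1) by (intro exI[of _ "(K - 1, B + 1)"]) auto
  qed
qed

section \<open>Discrete one-forms on the lattice of corners\<close>

type_synonym corner = "int \<times> int"

lemma adjacentE:
  assumes "adjacent a b"
  obtains x y where "a = (x, y)" "b = (x + 1, y)" | x y where "a = (x, y)" "b = (x - 1, y)"
    | x y where "a = (x, y)" "b = (x, y + 1)" | x y where "a = (x, y)" "b = (x, y - 1)"
proof -
  obtain x y u v where ab: "a = (x, y)" "b = (u, v)" by fastforce
  then have "\<bar>x - u\<bar> + \<bar>y - v\<bar> = 1" using assms by (simp add: adjacent_def)
  then have "(u = x + 1 \<and> v = y) \<or> (u = x - 1 \<and> v = y) \<or> (u = x \<and> v = y + 1) \<or> (u = x \<and> v = y - 1)"
    by arith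
  with ab that show ?thesis by blast
qed

lemma adjacent_sym: "adjacent a b \<Longrightarrow> adjacent b a"
  unfolding adjacent_def by (simp add: abs_minus_commute)

definition interval_sum :: "(int \<Rightarrow> 'a::ab_group_add) \<Rightarrow> int \<Rightarrow> int \<Rightarrow> 'a" where
  "interval_sum g a b = (\<Sum>k\<in>{a..<b}. g k) - (\<Sum>k\<in>{b..<a}. g k)"

lemma interval_sum_same [simp]: "interval_sum g a a = 0"
  by (simp add: interval_sum_def)

lemma interval_sum_succ: "interval_sum g a (b + 1) = interval_sum g a b + g b"
proof (cases "a \<le> b")
  case True
  then have "{a..<b+1} = insert b {a..<b}" "{b+1..<a} = {}" "{b..<a} = {}" by auto
  then show ?thesis unfolding interval_sum_def by simp
next
  case False
  then have "{b..<a} = insert b {b+1..<a}" "{a..<b+1} = {}" "{a..<b} = {}" by auto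
  then show ?thesis unfolding interval_sum_def by simp
qed

lemma interval_sum_pred: "interval_sum g a (b - 1) = interval_sum g a b - g (b - 1)"
  using interval_sum_succ[of g a "b - 1"] by simp

lemma interval_sum_add: "interval_sum (\<lambda>k. f k + g k) a b = interval_sum f a b + interval_sum g a b"
  unfolding interval_sum_def by (simp add: sum.distrib)

lemma interval_sum_diff: "interval_sum (\<lambda>k. f k - g k) a b = interval_sum f a b - interval_sum g a b"
  unfolding interval_sum_def by (simp add: sum_subtractf)

lemma interval_sum_uminus: "interval_sum (\<lambda>k. - f k) a b = - interval_sum f a b"
  unfolding interval_sum_def by (simp add: sum_negf)

lemma interval_sum_telescope: "interval_sum (\<lambda>k. h (k + 1) - h k) a b = h b - h a"
proof (induction b rule: int_induct[where k = a])
  case (step1 i) then show ?case by (simp add: interval_sum_succ)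
next
  case (step2 i) then show ?case by (simp add: interval_sum_pred)
qed simp

lemma interval_sum_zero: "(\<And>k. g k = 0) \<Longrightarrow> interval_sum g a b = 0"
  unfolding interval_sum_def by simp

lemma dvd_interval_sum: "(\<And>k. (m::'a::comm_ring_1) dvd g k) \<Longrightarrow> m dvd interval_sum g a b"
  unfolding interval_sum_def by (intro dvd_diff dvd_sum) auto

lemma interval_sum_cong:
  assumes "\<And>k. min a b \<le> k \<Longrightarrow> k < max a b \<Longrightarrow> f k = g k"
  shows "interval_sum f a b = interval_sum g a b"
  unfolding interval_sum_def using assms by (intro arg_cong2[where f = minus] sum.cong) auto

definition antisym_form :: "(corner \<Rightarrow> corner \<Rightarrow> 'a::ab_group_add) \<Rightarrow> bool" where
  "antisym_form w \<longleftrightarrow> (\<forall>a b. adjacent a b \<longrightarrow> w b a = - w a b)"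

text \<open>Corner \<open>(x, y)\<close> is the lattice point \<open>(x - 1/2, y - 1/2)\<close>, the lower left corner of
  square \<open>(x, y)\<close>; \<open>curl w c\<close> is the circulation of \<open>w\<close> counterclockwise around square \<open>c\<close>.\<close>

definition curl :: "(corner \<Rightarrow> corner \<Rightarrow> 'a::ab_group_add) \<Rightarrow> square \<Rightarrow> 'a" where
  "curl w c = w (fst c, snd c) (fst c + 1, snd c) + w (fst c + 1, snd c) (fst c + 1, snd c + 1)
     + w (fst c + 1, snd c + 1) (fst c, snd c + 1) + w (fst c, snd c + 1) (fst c, snd c)"

lemma curl_diff: "curl (\<lambda>a b. f a b - g a b) c = curl f c - curl g c"
  unfolding curl_def by (simp add: algebra_simps)

definition potential :: "(corner \<Rightarrow> corner \<Rightarrow> 'a::ab_group_add) \<Rightarrow> int \<Rightarrow> corner \<Rightarrow> 'a" where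
  "potential w x0 v = interval_sum (\<lambda>k. w (x0, k) (x0, k + 1)) 0 (snd v)
     + interval_sum (\<lambda>k. w (k, snd v) (k + 1, snd v)) x0 (fst v)"

text \<open>The failure of \<open>potential\<close> to be a primitive of \<open>w\<close> along a vertical step: the total curl of
  the row of squares between column \<open>x0\<close> and the step.\<close>

definition strip_curl :: "(corner \<Rightarrow> corner \<Rightarrow> 'a::ab_group_add) \<Rightarrow> int \<Rightarrow> corner \<Rightarrow> corner \<Rightarrow> 'a" where
  "strip_curl w x0 a b =
     (if b = (fst a, snd a + 1) then interval_sum (\<lambda>k. curl w (k, snd a)) x0 (fst a)
      else if a = (fst b, snd b + 1) then - interval_sum (\<lambda>k. curl w (k, snd b)) x0 (fst b) else 0)"

lemma potential_step_right:
  "w (x, y) (x + 1, y) = potential w x0 (x + 1, y) - potential w x0 (x, y) + strip_curl w x0 (x, y) (x + 1, y)"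
  unfolding potential_def strip_curl_def by (simp add: interval_sum_succ)

lemma curl_antisym_form:
  assumes "antisym_form w"
  shows "curl w (k, y) = w (k, y) (k + 1, y) + w (k + 1, y) (k + 1, y + 1)
    - w (k, y + 1) (k + 1, y + 1) - w (k, y) (k, y + 1)"
proof -
  have "adjacent (k, y + 1) (k + 1, y + 1)" "adjacent (k, y) (k, y + 1)"
    by (simp_all add: adjacent_def)
  then have "w (k + 1, y + 1) (k, y + 1) = - w (k, y + 1) (k + 1, y + 1)"
    "w (k, y + 1) (k, y) = - w (k, y) (k, y + 1)"
    using assms unfolding antisym_form_def by blast+
  then show ?thesis unfolding curl_def by simp
qed

lemma potential_step_up:
  assumes w: "antisym_form w"
  shows "w (x, y) (x, y + 1) = potential w x0 (x, y + 1) - potential w x0 (x, y) + strip_curl w x0 (x, y) (x, y + 1)"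
proof -
  have "interval_sum (\<lambda>k. curl w (k, y)) x0 x =
     interval_sum (\<lambda>k. w (k, y) (k + 1, y)) x0 x - interval_sum (\<lambda>k. w (k, y + 1) (k + 1, y + 1)) x0 x
     + interval_sum (\<lambda>k. w (k + 1, y) (k + 1, y + 1) - w (k, y) (k, y + 1)) x0 x"
    unfolding curl_antisym_form[OF w] interval_sum_add[symmetric] interval_sum_diff[symmetric]
    by (rule arg_cong[where f = "\<lambda>f. interval_sum f x0 x"]) (simp add: fun_eq_iff algebra_simps)
  also have "interval_sum (\<lambda>k. w (k + 1, y) (k + 1, y + 1) - w (k, y) (k, y + 1)) x0 x
      = w (x, y) (x, y + 1) - w (x0, y) (x0, y + 1)"
    using interval_sum_telescope[of "\<lambda>k. w (k, y) (k, y + 1)" x0 x] by simp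
  finally show ?thesis unfolding potential_def strip_curl_def by (simp add: interval_sum_succ)
qed

lemma form_eq_potential_diff:
  assumes w: "antisym_form w" and ab: "adjacent a b"
  shows "w a b = potential w x0 b - potential w x0 a + strip_curl w x0 a b"
  using ab
proof (cases rule: adjacentE)
  case (1 x y) then show ?thesis using potential_step_right by simp
next
  case (2 x y)
  have "w a b = - w b a" using w ab unfolding antisym_form_def by (metis adjacent_sym minus_minus)
  moreover have "w b a = potential w x0 a - potential w x0 b + strip_curl w x0 b a"
    using potential_step_right[of w "x - 1" y x0] 2 by simp
  moreover have "strip_curl w x0 a b = 0" "strip_curl w x0 b a = 0"
    using 2 unfolding strip_curl_def by auto
  ultimately show ?thesis by simp
next
  case (3 x y) then show ?thesis using potential_step_up[OF w] by simp
next
  case (4 x y)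
  have "w a b = - w b a" using w ab unfolding antisym_form_def by (metis adjacent_sym minus_minus)
  moreover have "w b a = potential w x0 a - potential w x0 b + strip_curl w x0 b a"
    using potential_step_up[OF w, of x "y - 1" x0] 4 by simp
  moreover have "strip_curl w x0 a b = - strip_curl w x0 b a" using 4 unfolding strip_curl_def by auto
  ultimately show ?thesis by simp
qed

lemma curl_zero_imp_potential_diff:
  assumes "antisym_form w" "adjacent a b" "\<And>c. curl w c = 0"
  shows "potential w x0 b - potential w x0 a = w a b"
proof -
  have "strip_curl w x0 a b = 0"
    unfolding strip_curl_def using assms(3) by (simp add: interval_sum_zero)
  then show ?thesis using form_eq_potential_diff[OF assms(1,2), of x0] by simp
qed

definition lattice_walk :: "(nat \<Rightarrow> corner) \<Rightarrow> nat \<Rightarrow> bool" where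
  "lattice_walk p n \<longleftrightarrow> (\<forall>i<n. adjacent (p i) (p (Suc i)))"

definition walk_bounded :: "int \<Rightarrow> (nat \<Rightarrow> corner) \<Rightarrow> nat \<Rightarrow> bool" where
  "walk_bounded B p n \<longleftrightarrow> (\<forall>i\<le>n. \<bar>fst (p i)\<bar> \<le> B \<and> \<bar>snd (p i)\<bar> \<le> B)"

lemma walk_bounded_mono: "walk_bounded B p n \<Longrightarrow> B \<le> B' \<Longrightarrow> walk_bounded B' p n"
  unfolding walk_bounded_def by force

lemma closed_walk_sum_eq_strip_curl:
  assumes w: "antisym_form w" and p: "lattice_walk p n" "p n = p 0"
  shows "(\<Sum>i<n. w (p i) (p (Suc i))) = (\<Sum>i<n. strip_curl w x0 (p i) (p (Suc i)))"
proof -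
  have "(\<Sum>i<n. w (p i) (p (Suc i))) = (\<Sum>i<n. (potential w x0 (p (Suc i)) - potential w x0 (p i))
      + strip_curl w x0 (p i) (p (Suc i)))"
    using form_eq_potential_diff[OF w] p(1) unfolding lattice_walk_def by (intro sum.cong) auto
  also have "\<dots> = (\<Sum>i<n. strip_curl w x0 (p i) (p (Suc i)))"
    using p(2) sum_lessThan_telescope[of "\<lambda>i. potential w x0 (p i)" n] by (simp add: sum.distrib)
  finally show ?thesis .
qed

definition interval_sign :: "int \<Rightarrow> int \<Rightarrow> int \<Rightarrow> int" where
  "interval_sign x0 x k = (if x0 \<le> k \<and> k < x then 1 else if x \<le> k \<and> k < x0 then -1 else 0)"

text \<open>The multiplicity with which square \<open>c\<close> enters \<open>strip_curl w x0 a b\<close>.\<close>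

definition strip_weight :: "int \<Rightarrow> square \<Rightarrow> corner \<Rightarrow> corner \<Rightarrow> int" where
  "strip_weight x0 c a b =
     (if b = (fst a, snd a + 1) then (if snd c = snd a then interval_sign x0 (fst a) (fst c) else 0)
      else if a = (fst b, snd b + 1) then (if snd c = snd b then - interval_sign x0 (fst b) (fst c) else 0)
      else 0)"

definition square_box :: "int \<Rightarrow> square set" where
  "square_box B = {-B..<B} \<times> {-B..<B}"

lemma finite_square_box [simp]: "finite (square_box B)"
  unfolding square_box_def by simp

lemma interval_sum_eq_interval_sign:
  assumes "\<bar>x0\<bar> \<le> B" "\<bar>x\<bar> \<le> B"
  shows "interval_sum g x0 x = (\<Sum>k\<in>{-B..<B}. of_int (interval_sign x0 x k) * g k)"
proof -
  have "(\<Sum>k\<in>{-B..<B}. of_int (interval_sign x0 x k) * g k) =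
     (\<Sum>k\<in>{-B..<B}. (if k \<in> {x0..<x} then g k else 0) - (if k \<in> {x..<x0} then g k else 0))"
    by (intro sum.cong) (auto simp: interval_sign_def)
  also have "\<dots> = (\<Sum>k\<in>{-B..<B} \<inter> {x0..<x}. g k) - (\<Sum>k\<in>{-B..<B} \<inter> {x..<x0}. g k)"
    unfolding sum_subtractf by (simp only: sum.inter_restrict[OF finite_atLeastLessThan_int])
  also have "\<dots> = interval_sum g x0 x"
  proof -
    have "{-B..<B} \<inter> {x0..<x} = {x0..<x}" "{-B..<B} \<inter> {x..<x0} = {x..<x0}"
      using assms by auto
    then show ?thesis unfolding interval_sum_def by simp
  qed
  finally show ?thesis by (rule sym)
qed

lemma strip_curl_eq_weighted_sum:
  fixes w :: "corner \<Rightarrow> corner \<Rightarrow> 'a::comm_ring_1"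
  assumes ab: "adjacent a b"
    and B: "\<bar>x0\<bar> \<le> B" "\<bar>fst a\<bar> \<le> B" "\<bar>snd a\<bar> \<le> B" "\<bar>fst b\<bar> \<le> B" "\<bar>snd b\<bar> \<le> B"
  shows "strip_curl w x0 a b = (\<Sum>c\<in>square_box B. of_int (strip_weight x0 c a b) * curl w c)"
proof -
  have row: "(\<Sum>c\<in>square_box B. of_int (if snd c = y then interval_sign x0 x (fst c) else 0) * curl w c)
      = interval_sum (\<lambda>k. curl w (k, y)) x0 x"
    if "\<bar>x\<bar> \<le> B" "-B \<le> y" "y < B" for x y
  proof -
    have "(\<Sum>c\<in>square_box B. of_int (if snd c = y then interval_sign x0 x (fst c) else 0) * curl w c)
        = (\<Sum>k\<in>{-B..<B}. \<Sum>m\<in>{-B..<B}. if m = y then of_int (interval_sign x0 x k) * curl w (k, m) else 0)"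
      unfolding square_box_def sum.cartesian_product by (intro sum.cong) auto
    also have "\<dots> = (\<Sum>k\<in>{-B..<B}. of_int (interval_sign x0 x k) * curl w (k, y))"
      using that by simp
    also have "\<dots> = interval_sum (\<lambda>k. curl w (k, y)) x0 x"
      by (rule interval_sum_eq_interval_sign[OF B(1) that(1), symmetric])
    finally show ?thesis .
  qed
  show ?thesis using ab
  proof (cases rule: adjacentE)
    case (3 x y)
    then have "strip_weight x0 c a b = (if snd c = y then interval_sign x0 x (fst c) else 0)" for c
      unfolding strip_weight_def by auto
    then show ?thesis using row[of x y] 3 B unfolding strip_curl_def by simp
  next
    case (4 x y)
    then have "strip_weight x0 c a b = - (if snd c = y - 1 then interval_sign x0 x (fst c) else 0)" for c
      unfolding strip_weight_def by auto
    then show ?thesis using row[of x "y - 1"] 4 B unfolding strip_curl_def by (simp add: sum_negf)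
  qed (auto simp: strip_weight_def strip_curl_def)
qed

definition walk_winding :: "int \<Rightarrow> (nat \<Rightarrow> corner) \<Rightarrow> nat \<Rightarrow> square \<Rightarrow> int" where
  "walk_winding x0 p n c = (\<Sum>i<n. strip_weight x0 c (p i) (p (Suc i)))"

lemma closed_walk_sum_eq_winding:
  fixes w :: "corner \<Rightarrow> corner \<Rightarrow> 'a::comm_ring_1"
  assumes w: "antisym_form w" and p: "lattice_walk p n" "p n = p 0"
    and B: "\<bar>x0\<bar> \<le> B" "walk_bounded B p n"
  shows "(\<Sum>i<n. w (p i) (p (Suc i))) = (\<Sum>c\<in>square_box B. of_int (walk_winding x0 p n c) * curl w c)"
proof -
  have "(\<Sum>i<n. w (p i) (p (Suc i))) = (\<Sum>i<n. strip_curl w x0 (p i) (p (Suc i)))"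
    by (rule closed_walk_sum_eq_strip_curl[OF w p])
  also have "\<dots> = (\<Sum>i<n. \<Sum>c\<in>square_box B. of_int (strip_weight x0 c (p i) (p (Suc i))) * curl w c)"
    using B p(1) unfolding walk_bounded_def lattice_walk_def
    by (intro sum.cong refl strip_curl_eq_weighted_sum) auto
  also have "\<dots> = (\<Sum>c\<in>square_box B. of_int (walk_winding x0 p n c) * curl w c)"
    unfolding walk_winding_def of_int_sum sum_distrib_right by (rule sum.swap)
  finally show ?thesis .
qed

lemma walk_winding_outside_box:
  assumes B: "\<bar>x0\<bar> \<le> B" "walk_bounded B p n" and c: "c \<notin> square_box B"
  shows "walk_winding x0 p n c = 0"
  unfolding walk_winding_def
proof (intro sum.neutral ballI)
  fix i assume i: "i \<in> {..<n}"
  have b: "\<bar>fst (p i)\<bar> \<le> B" "\<bar>snd (p i)\<bar> \<le> B" "\<bar>fst (p (Suc i))\<bar> \<le> B" "\<bar>snd (p (Suc i))\<bar> \<le> B"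
    using B(2) i unfolding walk_bounded_def by auto
  have sign: "-B \<le> k \<and> k < B" if "interval_sign x0 x k \<noteq> 0" "\<bar>x\<bar> \<le> B" for x k
    using B(1) that unfolding interval_sign_def by (auto split: if_splits)
  show "strip_weight x0 c (p i) (p (Suc i)) = 0"
  proof (rule ccontr)
    assume "strip_weight x0 c (p i) (p (Suc i)) \<noteq> 0"
    then consider
        "snd (p (Suc i)) = snd (p i) + 1" "snd c = snd (p i)" "interval_sign x0 (fst (p i)) (fst c) \<noteq> 0"
      | "snd (p i) = snd (p (Suc i)) + 1" "snd c = snd (p (Suc i))"
          "interval_sign x0 (fst (p (Suc i))) (fst c) \<noteq> 0"
      unfolding strip_weight_def by (auto split: if_splits)
    then show False
    proof cases
      case 1
      then show False using c b sign[OF 1(3)] unfolding square_box_def by (auto simp: mem_Times_iff)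
    next
      case 2
      then show False using c b sign[OF 2(3)] unfolding square_box_def by (auto simp: mem_Times_iff)
    qed
  qed
qed

definition corners :: "square \<Rightarrow> corner set" where
  "corners c = {(fst c, snd c), (fst c + 1, snd c), (fst c, snd c + 1), (fst c + 1, snd c + 1)}"

definition unit_edge_form :: "corner \<Rightarrow> corner \<Rightarrow> corner \<Rightarrow> corner \<Rightarrow> int" where
  "unit_edge_form u v a b = (if a = u \<and> b = v then 1 else if a = v \<and> b = u then -1 else 0)"

lemma antisym_unit_edge_form: "u \<noteq> v \<Longrightarrow> antisym_form (unit_edge_form u v)"
  unfolding antisym_form_def unit_edge_form_def by auto

lemma curl_unit_edge_form_vertical:
  "curl (unit_edge_form (x + 1, y) (x + 1, y + 1)) c = (if c = (x, y) then 1 else if c = (x + 1, y) then -1 else 0)"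
  by (cases c) (auto simp: curl_def unit_edge_form_def)

lemma curl_unit_edge_form_horizontal:
  "curl (unit_edge_form (x, y + 1) (x + 1, y + 1)) c = (if c = (x, y + 1) then 1 else if c = (x, y) then -1 else 0)"
  by (cases c) (auto simp: curl_def unit_edge_form_def)

lemma sum_mult_two_point_indicator:
  assumes "c1 \<in> A" "c2 \<in> A" "c1 \<noteq> c2" "finite A"
  shows "(\<Sum>c\<in>A. f c * (if c = c1 then 1 else if c = c2 then -1 else 0)) = f c1 - (f c2 :: int)"
proof -
  have "(\<Sum>c\<in>A. f c * (if c = c1 then 1 else if c = c2 then -1 else 0))
      = (\<Sum>c\<in>A. (if c = c1 then f c else 0) - (if c = c2 then f c else 0))"
    using assms(3) by (intro sum.cong) auto
  also have "\<dots> = f c1 - f c2" using assms by (simp add: sum_subtractf)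
  finally show ?thesis .
qed

lemma walk_sum_unit_edge_form_avoiding:
  assumes "\<And>i. i \<le> n \<Longrightarrow> p i \<noteq> u"
  shows "(\<Sum>i<n. unit_edge_form u v (p i) (p (Suc i))) = 0"
  using assms by (intro sum.neutral) (auto simp: unit_edge_form_def)

text \<open>A closed walk that avoids an endpoint of the edge separating two squares winds equally
  around both: apply Stokes' formula to the unit form of that edge.\<close>

lemma walk_winding_right:
  assumes p: "lattice_walk p n" "p n = p 0" and B: "\<bar>x0\<bar> \<le> B" "walk_bounded B p n"
    and avoid: "\<And>i. i \<le> n \<Longrightarrow> p i \<noteq> (x + 1, y)"
  shows "walk_winding x0 p n (x, y) = walk_winding x0 p n (x + 1, y)"
proof -
  define B' where "B' = max B (\<bar>x\<bar> + \<bar>y\<bar> + 2)"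
  have B': "\<bar>x0\<bar> \<le> B'" "walk_bounded B' p n"
    using B walk_bounded_mono[OF B(2)] unfolding B'_def by auto
  have "0 = (\<Sum>i<n. unit_edge_form (x + 1, y) (x + 1, y + 1) (p i) (p (Suc i)))"
    using avoid by (intro walk_sum_unit_edge_form_avoiding[symmetric]) auto
  also have "\<dots> = (\<Sum>c\<in>square_box B'. walk_winding x0 p n c * curl (unit_edge_form (x + 1, y) (x + 1, y + 1)) c)"
    using closed_walk_sum_eq_winding[OF antisym_unit_edge_form p B'] by simp
  also have "\<dots> = walk_winding x0 p n (x, y) - walk_winding x0 p n (x + 1, y)"
    unfolding curl_unit_edge_form_vertical
    by (rule sum_mult_two_point_indicator) (auto simp: square_box_def B'_def)
  finally show ?thesis by simp
qed

lemma walk_winding_up: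
  assumes p: "lattice_walk p n" "p n = p 0" and B: "\<bar>x0\<bar> \<le> B" "walk_bounded B p n"
    and avoid: "\<And>i. i \<le> n \<Longrightarrow> p i \<noteq> (x, y + 1)"
  shows "walk_winding x0 p n (x, y + 1) = walk_winding x0 p n (x, y)"
proof -
  define B' where "B' = max B (\<bar>x\<bar> + \<bar>y\<bar> + 2)"
  have B': "\<bar>x0\<bar> \<le> B'" "walk_bounded B' p n"
    using B walk_bounded_mono[OF B(2)] unfolding B'_def by auto
  have "0 = (\<Sum>i<n. unit_edge_form (x, y + 1) (x + 1, y + 1) (p i) (p (Suc i)))"
    using avoid by (intro walk_sum_unit_edge_form_avoiding[symmetric]) auto
  also have "\<dots> = (\<Sum>c\<in>square_box B'. walk_winding x0 p n c * curl (unit_edge_form (x, y + 1) (x + 1, y + 1)) c)"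
    using closed_walk_sum_eq_winding[OF antisym_unit_edge_form p B'] by simp
  also have "\<dots> = walk_winding x0 p n (x, y + 1) - walk_winding x0 p n (x, y)"
    unfolding curl_unit_edge_form_horizontal
    by (rule sum_mult_two_point_indicator) (auto simp: square_box_def B'_def)
  finally show ?thesis by simp
qed

lemma walk_winding_adjacent:
  assumes p: "lattice_walk p n" "p n = p 0" and B: "\<bar>x0\<bar> \<le> B" "walk_bounded B p n"
    and adj: "adjacent c1 c2" and avoid: "\<And>i. i \<le> n \<Longrightarrow> p i \<notin> corners c1"
  shows "walk_winding x0 p n c1 = walk_winding x0 p n c2"
  using adj
proof (cases rule: adjacentE)
  case (1 x y)
  show ?thesis using walk_winding_right[OF p B, of x y] avoid 1 unfolding corners_def by auto
next
  case (2 x y)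
  show ?thesis using walk_winding_right[OF p B, of "x - 1" y] avoid 2 unfolding corners_def by auto
next
  case (3 x y)
  show ?thesis using walk_winding_up[OF p B, of x y] avoid 3 unfolding corners_def by auto
next
  case (4 x y)
  show ?thesis using walk_winding_up[OF p B, of x "y - 1"] avoid 4 unfolding corners_def by auto
qed

lemma walk_winding_outer_chain:
  assumes p: "lattice_walk p n" "p n = p 0" and B: "\<bar>x0\<bar> \<le> B" "walk_bounded B p n"
    and avoid: "\<And>i c. i \<le> n \<Longrightarrow> c \<notin> R \<Longrightarrow> p i \<notin> corners c"
    and chain: "(outer_adjacent R)\<^sup>*\<^sup>* c c'"
  shows "walk_winding x0 p n c = walk_winding x0 p n c'"
  using chain
proof (induction rule: rtranclp_induct)
  case (step y z)
  then show ?case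
    using walk_winding_adjacent[OF p B, of y z] avoid unfolding outer_adjacent_def by metis
qed simp

lemma walk_winding_outer_square:
  assumes sc: "simply_connected_region R" and p: "lattice_walk p n" "p n = p 0"
    and B: "0 \<le> B" "walk_bounded B p n"
    and avoid: "\<And>i c. i \<le> n \<Longrightarrow> c \<notin> R \<Longrightarrow> p i \<notin> corners c" and c: "c \<notin> R"
  shows "walk_winding 0 p n c = 0"
proof -
  have B0: "\<bar>0::int\<bar> \<le> B" using B(1) by simp
  obtain c' where c': "(outer_adjacent R)\<^sup>*\<^sup>* c c'" "fst c' < - B"
    using outer_square_reaches_left[OF sc c] by blast
  have "walk_winding 0 p n c = walk_winding 0 p n c'"
    by (rule walk_winding_outer_chain[OF p B0 B(2) avoid c'(1)])
  also have "\<dots> = 0"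
    by (rule walk_winding_outside_box[OF B0 B(2)]) (use c'(2) in \<open>auto simp: square_box_def\<close>)
  finally show ?thesis .
qed

section \<open>Thurston's height functions\<close>

definition left_square :: "corner \<Rightarrow> corner \<Rightarrow> square" where
  "left_square a b =
     (if b = (fst a + 1, snd a) then a
      else if b = (fst a, snd a + 1) then (fst a - 1, snd a)
      else if b = (fst a - 1, snd a) then (fst a - 1, snd a - 1)
      else (fst a, snd a - 1))"

definition right_square :: "corner \<Rightarrow> corner \<Rightarrow> square" where
  "right_square a b = left_square b a"

lemma left_square_steps:
  "left_square (x, y) (x + 1, y) = (x, y)" "left_square (x, y) (x, y + 1) = (x - 1, y)"
  "left_square (x, y) (x - 1, y) = (x - 1, y - 1)" "left_square (x, y) (x, y - 1) = (x, y - 1)"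
  by (auto simp: left_square_def)

lemma right_square_steps:
  "right_square (x, y) (x + 1, y) = (x, y - 1)" "right_square (x, y) (x, y + 1) = (x, y)"
  "right_square (x, y) (x - 1, y) = (x - 1, y)" "right_square (x, y) (x, y - 1) = (x - 1, y - 1)"
  by (auto simp: left_square_def right_square_def)

lemma left_square_ccw:
  "left_square (x, y) (x + 1, y) = (x, y)" "left_square (x + 1, y) (x + 1, y + 1) = (x, y)"
  "left_square (x + 1, y + 1) (x, y + 1) = (x, y)" "left_square (x, y + 1) (x, y) = (x, y)"
  by (auto simp: left_square_def)

lemma right_square_ccw:
  "right_square (x, y) (x + 1, y) = (x, y - 1)" "right_square (x + 1, y) (x + 1, y + 1) = (x + 1, y)"
  "right_square (x + 1, y + 1) (x, y + 1) = (x, y + 1)" "right_square (x, y + 1) (x, y) = (x - 1, y)"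
  by (auto simp: left_square_def right_square_def)

lemma adjacent_left_right_square: "adjacent a b \<Longrightarrow> adjacent (left_square a b) (right_square a b)"
  by (erule adjacentE) (auto simp: left_square_def right_square_def adjacent_def)

definition square_sign :: "square \<Rightarrow> int" where
  "square_sign c = (if even (fst c + snd c) then 1 else -1)"

lemma square_sign_adjacent: "adjacent p q \<Longrightarrow> square_sign q = - square_sign p"
  by (erule adjacentE) (auto simp: square_sign_def)

text \<open>Thurston's height increment along the edge from \<open>a\<close> to \<open>b\<close>.\<close>

definition height_form :: "edge set \<Rightarrow> corner \<Rightarrow> corner \<Rightarrow> int" where
  "height_form T a b = square_sign (left_square a b) * (if {left_square a b, right_square a b} \<in> T then -3 else 1)"

lemma height_form_swap: "adjacent a b \<Longrightarrow> height_form T b a = - height_form T a b"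
proof -
  assume ab: "adjacent a b"
  have "square_sign (left_square b a) = - square_sign (left_square a b)"
    using square_sign_adjacent[OF adjacent_left_right_square[OF ab]] by (simp add: right_square_def)
  moreover have "{left_square b a, right_square b a} = {left_square a b, right_square a b}"
    by (auto simp: right_square_def)
  ultimately show ?thesis unfolding height_form_def by simp
qed

lemma antisym_height_form: "antisym_form (height_form T)"
  unfolding antisym_form_def using height_form_swap by blast

lemma tiling_partner:
  assumes "is_tiling R T" "p \<in> R"
  obtains q where "{p, q} \<in> T" "adjacent p q" "\<And>e. e \<in> T \<Longrightarrow> p \<in> e \<Longrightarrow> e = {p, q}"
proof -
  have "\<exists>!e. e \<in> T \<and> p \<in> e" using assms unfolding is_tiling_def by blast
  then obtain e where e: "e \<in> T" "p \<in> e" and uniq: "\<And>e'. e' \<in> T \<Longrightarrow> p \<in> e' \<Longrightarrow> e' = e"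
    by blast
  have "e \<in> grid_edges R" using assms e unfolding is_tiling_def by blast
  then obtain a b where ab: "e = {a, b}" "adjacent a b" unfolding grid_edges_def by blast
  consider "p = a" | "p = b" using ab e by auto
  then show ?thesis
  proof cases
    case 1
    then show ?thesis using that[of b] e uniq ab by blast
  next
    case 2
    then have "e = {p, a}" "adjacent p a" using ab adjacent_sym by auto
    then show ?thesis using that[of a] e uniq by blast
  qed
qed

lemma tiling_edge:
  assumes "is_tiling R T" "{p, q} \<in> T"
  shows "p \<in> R" "q \<in> R" "adjacent p q"
proof -
  obtain a b where ab: "{p, q} = {a, b}" "a \<in> R" "b \<in> R" "adjacent a b"
    using assms unfolding is_tiling_def grid_edges_def by blast
  then show "p \<in> R" "q \<in> R" by (auto simp: doubleton_eq_iff)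
  show "adjacent p q" using ab by (auto simp: doubleton_eq_iff adjacent_sym)
qed

text \<open>The domino covering a square crosses exactly one of its four edges, and \<open>1 + 1 + 1 - 3 = 0\<close>.\<close>

lemma curl_height_form:
  assumes T: "is_tiling R T" and c: "c \<in> R"
  shows "curl (height_form T) c = 0"
proof -
  obtain x y where cxy: "c = (x, y)" by fastforce
  obtain q where q: "{c, q} \<in> T" "adjacent c q" "\<And>e. e \<in> T \<Longrightarrow> c \<in> e \<Longrightarrow> e = {c, q}"
    using tiling_partner[OF T c] by blast
  have mem: "{(x, y), r} \<in> T \<longleftrightarrow> r = q" for r
  proof
    assume "{(x, y), r} \<in> T"
    then have "{c, r} = {c, q}" using q(3)[of "{c, r}"] cxy by simp
    then show "r = q" by (auto simp: doubleton_eq_iff)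
  qed (use q(1) cxy in simp)
  have "curl (height_form T) (x, y) = square_sign (x, y) * (if {(x, y), (x, y - 1)} \<in> T then -3 else 1)
     + square_sign (x, y) * (if {(x, y), (x + 1, y)} \<in> T then -3 else 1)
     + square_sign (x, y) * (if {(x, y), (x, y + 1)} \<in> T then -3 else 1)
     + square_sign (x, y) * (if {(x, y), (x - 1, y)} \<in> T then -3 else 1)"
    unfolding curl_def height_form_def fst_conv snd_conv left_square_ccw right_square_ccw by simp
  also have "\<dots> = 0"
    using q(2) cxy unfolding mem by (cases rule: adjacentE) (simp_all add: square_sign_def)
  finally show ?thesis using cxy by simp
qed

lemma height_form_outside:
  assumes "is_tiling R T" "left_square a b \<notin> R \<or> right_square a b \<notin> R"
  shows "height_form T a b = square_sign (left_square a b)"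
proof -
  have "{left_square a b, right_square a b} \<notin> T" using assms tiling_edge by blast
  then show ?thesis unfolding height_form_def by simp
qed

definition height_diff_form :: "edge set \<Rightarrow> edge set \<Rightarrow> corner \<Rightarrow> corner \<Rightarrow> int" where
  "height_diff_form T1 T2 a b = height_form T1 a b - height_form T2 a b"

lemma height_diff_form_outside:
  assumes "is_tiling R T1" "is_tiling R T2" "left_square a b \<notin> R \<or> right_square a b \<notin> R"
  shows "height_diff_form T1 T2 a b = 0"
  using height_form_outside[OF assms(1,3)] height_form_outside[OF assms(2,3)]
  unfolding height_diff_form_def by simp

lemma antisym_height_diff_form: "antisym_form (height_diff_form T1 T2)"
  unfolding antisym_form_def height_diff_form_def using height_form_swap by simp

lemma curl_height_diff_form:
  assumes T1: "is_tiling R T1" and T2: "is_tiling R T2"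
  shows "curl (height_diff_form T1 T2) c = 0"
proof (cases "c \<in> R")
  case True
  have "curl (height_diff_form T1 T2) c = curl (height_form T1) c - curl (height_form T2) c"
    unfolding height_diff_form_def[abs_def] by (rule curl_diff)
  then show ?thesis using curl_height_form[OF T1 True] curl_height_form[OF T2 True] by simp
next
  case False
  obtain x y where c: "c = (x, y)" by fastforce
  have "height_diff_form T1 T2 (x, y) (x + 1, y) = 0" "height_diff_form T1 T2 (x + 1, y) (x + 1, y + 1) = 0"
     "height_diff_form T1 T2 (x + 1, y + 1) (x, y + 1) = 0" "height_diff_form T1 T2 (x, y + 1) (x, y) = 0"
    using False c by (auto intro!: height_diff_form_outside[OF T1 T2] simp: left_square_ccw)
  then show ?thesis unfolding curl_def c by simp
qed

lemma four_dvd_height_diff_form: "4 dvd height_diff_form T1 T2 a b"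
  unfolding height_diff_form_def height_form_def square_sign_def by auto

text \<open>The difference \<open>h\<^sub>T\<^sub>1 - h\<^sub>T\<^sub>2\<close> of Thurston's height functions, normalised to vanish left of the
  region.\<close>

definition height_diff :: "square set \<Rightarrow> edge set \<Rightarrow> edge set \<Rightarrow> corner \<Rightarrow> int" where
  "height_diff R T1 T2 v = potential (height_diff_form T1 T2) (- region_bound R) v"

lemma height_diff_step:
  assumes "is_tiling R T1" "is_tiling R T2" "adjacent a b"
  shows "height_diff R T1 T2 b - height_diff R T1 T2 a = height_diff_form T1 T2 a b"
  unfolding height_diff_def
  by (rule curl_zero_imp_potential_diff[OF antisym_height_diff_form assms(3) curl_height_diff_form[OF assms(1,2)]])

lemma height_diff_left:
  assumes fin: "finite R" and T1: "is_tiling R T1" and T2: "is_tiling R T2"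
    and v: "fst v \<le> - region_bound R"
  shows "height_diff R T1 T2 v = 0"
proof -
  have out: "q \<notin> R" if "fst q < - region_bound R" for q
    using region_bound[OF fin, of q] that by auto
  have "interval_sum (\<lambda>k. height_diff_form T1 T2 (- region_bound R, k) (- region_bound R, k + 1)) 0 (snd v) = 0"
    by (rule interval_sum_zero, rule height_diff_form_outside[OF T1 T2]) (simp add: left_square_steps out)
  moreover have "interval_sum (\<lambda>k. height_diff_form T1 T2 (k, snd v) (k + 1, snd v)) (- region_bound R) (fst v) =
      interval_sum (\<lambda>k. 0) (- region_bound R) (fst v)"
    by (rule interval_sum_cong, rule height_diff_form_outside[OF T1 T2], rule disjI1)
      (use v in \<open>auto simp: left_square_steps intro!: out\<close>)
  ultimately show ?thesis unfolding height_diff_def potential_def by (simp add: interval_sum_zero)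
qed

lemma four_dvd_height_diff: "4 dvd height_diff R T1 T2 v"
  unfolding height_diff_def potential_def by (intro dvd_add dvd_interval_sum four_dvd_height_diff_form)

lemma height_diff_swap: "height_diff R T2 T1 v = - height_diff R T1 T2 v"
proof -
  have "height_diff_form T2 T1 = (\<lambda>a b. - height_diff_form T1 T2 a b)"
    unfolding height_diff_form_def by (simp add: fun_eq_iff)
  then show ?thesis unfolding height_diff_def potential_def by (simp add: interval_sum_uminus)
qed

lemma height_diff_outer_square:
  assumes T1: "is_tiling R T1" and T2: "is_tiling R T2" and c: "c \<notin> R" and v: "v \<in> corners c"
  shows "height_diff R T1 T2 v = height_diff R T1 T2 c"
proof -
  obtain x y where cxy: "c = (x, y)" by fastforce
  let ?d = "height_diff R T1 T2"
  have "?d (x + 1, y) - ?d (x, y) = 0" "?d (x + 1, y + 1) - ?d (x + 1, y) = 0" "?d (x, y) - ?d (x, y + 1) = 0"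
    using height_diff_step[OF T1 T2, of "(x, y)" "(x + 1, y)"]
      height_diff_step[OF T1 T2, of "(x + 1, y)" "(x + 1, y + 1)"]
      height_diff_step[OF T1 T2, of "(x, y + 1)" "(x, y)"]
      height_diff_form_outside[OF T1 T2] c cxy
    by (simp_all add: adjacent_def left_square_ccw)
  then show ?thesis using v cxy unfolding corners_def by auto
qed

lemma corner_of_adjacent_squares:
  assumes "adjacent c c'"
  shows "(max (fst c) (fst c'), max (snd c) (snd c')) \<in> corners c \<inter> corners c'"
  using assms by (rule adjacentE) (auto simp: corners_def)

text \<open>This is where simple connectivity enters: every square outside the region is joined by
  outside squares to the left of the region, where the height difference vanishes.\<close>

lemma height_diff_outer_corner:
  assumes sc: "simply_connected_region R" and T1: "is_tiling R T1" and T2: "is_tiling R T2"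
    and c: "c \<notin> R" and v: "v \<in> corners c"
  shows "height_diff R T1 T2 v = 0"
proof -
  have fin: "finite R" using sc simply_connected_region_def by blast
  let ?d = "height_diff R T1 T2"
  obtain c' where c': "(outer_adjacent R)\<^sup>*\<^sup>* c c'" "fst c' < - region_bound R"
    using outer_square_reaches_left[OF sc c] by blast
  have "?d c' = ?d c" using c'(1)
  proof (induction rule: rtranclp_induct)
    case (step y z)
    then have "y \<notin> R" "z \<notin> R" "adjacent y z" unfolding outer_adjacent_def by auto
    then have "?d y = ?d z"
      using corner_of_adjacent_squares height_diff_outer_square[OF T1 T2] by (metis IntD1 IntD2)
    then show ?case using step.IH by simp
  qed simp
  moreover have "?d c' = 0" using height_diff_left[OF fin T1 T2] c'(2) by simp
  ultimately show ?thesis using height_diff_outer_square[OF T1 T2 c v] by simp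
qed

lemma height_diff_nonzero_interior:
  assumes sc: "simply_connected_region R" and T1: "is_tiling R T1" and T2: "is_tiling R T2"
    and nz: "height_diff R T1 T2 (i, j) \<noteq> 0"
  shows "(i - 1, j - 1) \<in> R" "(i, j - 1) \<in> R" "(i - 1, j) \<in> R" "(i, j) \<in> R"
proof -
  have "(i, j) \<in> corners (i - 1, j - 1)" "(i, j) \<in> corners (i, j - 1)"
    "(i, j) \<in> corners (i - 1, j)" "(i, j) \<in> corners (i, j)"
    unfolding corners_def by auto
  then show "(i - 1, j - 1) \<in> R" "(i, j - 1) \<in> R" "(i - 1, j) \<in> R" "(i, j) \<in> R"
    using height_diff_outer_corner[OF sc T1 T2] nz by blast+
qed

section \<open>Flip moves\<close>

lemma is_tiling_unique:
  assumes T: "is_tiling R T" and e: "e1 \<in> T" "e2 \<in> T" "p \<in> e1" "p \<in> e2"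
  shows "e1 = e2"
proof -
  have "e1 \<in> grid_edges R" using T e unfolding is_tiling_def by blast
  then have "p \<in> R" using e(3) unfolding grid_edges_def by blast
  then have "\<exists>!e. e \<in> T \<and> p \<in> e" using T unfolding is_tiling_def by blast
  then show ?thesis using e by blast
qed

lemma flip_moveE:
  assumes "flip_move T D1 D2"
  obtains a b where "D1 = hdom a b" "D2 = vdom a b" "D1 \<subseteq> T"
    | a b where "D1 = vdom a b" "D2 = hdom a b" "D1 \<subseteq> T"
  using assms unfolding flip_move_def by blast

definition block :: "int \<Rightarrow> int \<Rightarrow> square set" where
  "block a b = {(a, b), (a + 1, b), (a, b + 1), (a + 1, b + 1)}"

lemma hdom_vdom_disjoint: "hdom a b \<inter> vdom a b = {}"
  unfolding hdom_def vdom_def by (auto simp: doubleton_eq_iff)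

lemma domino_subset_block: "e \<in> hdom a b \<union> vdom a b \<Longrightarrow> e \<subseteq> block a b"
  unfolding hdom_def vdom_def block_def by auto

lemma block_cover_hdom: "p \<in> block a b \<Longrightarrow> \<exists>!e. e \<in> hdom a b \<and> p \<in> e"
  unfolding hdom_def block_def by (auto simp: doubleton_eq_iff)

lemma block_cover_vdom: "p \<in> block a b \<Longrightarrow> \<exists>!e. e \<in> vdom a b \<and> p \<in> e"
  unfolding vdom_def block_def by (auto simp: doubleton_eq_iff)

lemma flip_move_block:
  assumes "flip_move T D1 D2"
  obtains a b where "D1 \<union> D2 = hdom a b \<union> vdom a b" "D1 \<inter> D2 = {}" "D1 \<subseteq> T"
    "\<And>p. p \<in> block a b \<Longrightarrow> \<exists>!e. e \<in> D1 \<and> p \<in> e"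
    "\<And>p. p \<in> block a b \<Longrightarrow> \<exists>!e. e \<in> D2 \<and> p \<in> e"
  using assms
proof (cases rule: flip_moveE)
  case (1 a b)
  then show ?thesis using that[of a b] hdom_vdom_disjoint block_cover_hdom block_cover_vdom by auto
next
  case (2 a b)
  then show ?thesis using that[of a b] hdom_vdom_disjoint block_cover_hdom block_cover_vdom by auto
qed

lemma flip_move_disjoint:
  assumes T: "is_tiling R T" and f: "flip_move T D1 D2"
  shows "D2 \<inter> T = {}"
proof -
  obtain a b where ab: "D1 \<union> D2 = hdom a b \<union> vdom a b" "D1 \<inter> D2 = {}" "D1 \<subseteq> T"
    "\<And>p. p \<in> block a b \<Longrightarrow> \<exists>!e. e \<in> D1 \<and> p \<in> e"
    by (rule flip_move_block[OF f]) blast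
  have "e2 \<notin> T" if e2: "e2 \<in> D2" for e2
  proof
    assume "e2 \<in> T"
    obtain p where p: "p \<in> e2" using e2 ab(1) unfolding hdom_def vdom_def by blast
    then have "p \<in> block a b" using e2 ab(1) domino_subset_block by blast
    then obtain e1 where "e1 \<in> D1" "p \<in> e1" using ab(4) by blast
    then have "e1 = e2" using is_tiling_unique[OF T _ \<open>e2 \<in> T\<close> _ p] ab(3) by blast
    then show False using \<open>e1 \<in> D1\<close> e2 ab(2) by blast
  qed
  then show ?thesis by blast
qed

lemma grid_edgesI: "p \<in> R \<Longrightarrow> q \<in> R \<Longrightarrow> adjacent p q \<Longrightarrow> {p, q} \<in> grid_edges R"
  unfolding grid_edges_def by blast

lemma grid_edges_subset: "e \<in> grid_edges R \<Longrightarrow> e \<subseteq> R"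
  unfolding grid_edges_def by blast

lemma dominoes_in_grid_edges:
  assumes "block a b \<subseteq> R"
  shows "hdom a b \<union> vdom a b \<subseteq> grid_edges R"
  using assms unfolding hdom_def vdom_def block_def
  by (auto intro!: grid_edgesI simp: adjacent_def)

lemma is_tiling_flip:
  assumes T: "is_tiling R T" and f: "flip_move T D1 D2"
  shows "is_tiling R ((T - D1) \<union> D2)"
proof -
  obtain a b where ab: "D1 \<union> D2 = hdom a b \<union> vdom a b" "D1 \<subseteq> T"
    "\<And>p. p \<in> block a b \<Longrightarrow> \<exists>!e. e \<in> D1 \<and> p \<in> e"
    "\<And>p. p \<in> block a b \<Longrightarrow> \<exists>!e. e \<in> D2 \<and> p \<in> e"
    by (rule flip_move_block[OF f]) blast
  have "block a b \<subseteq> R"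
  proof
    fix p assume "p \<in> block a b"
    then obtain e where "e \<in> D1" "p \<in> e" using ab(3) by blast
    then show "p \<in> R" using ab(2) T grid_edges_subset unfolding is_tiling_def by blast
  qed
  then have "D2 \<subseteq> grid_edges R" using ab(1) dominoes_in_grid_edges by blast
  then have "(T - D1) \<union> D2 \<subseteq> grid_edges R" using T unfolding is_tiling_def by blast
  moreover have "\<exists>!e. e \<in> (T - D1) \<union> D2 \<and> p \<in> e" if p: "p \<in> R" for p
  proof (cases "p \<in> block a b")
    case True
    have "e \<notin> T - D1" if "e \<in> T" "p \<in> e" for e
      using ab(3)[OF True] is_tiling_unique[OF T that(1) _ that(2)] ab(2) by blast
    then show ?thesis using ab(4)[OF True] by blast
  next
    case False
    then have "p \<notin> e" if "e \<in> D1 \<union> D2" for e using that domino_subset_block ab(1) by blast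
    then show ?thesis using T p unfolding is_tiling_def by blast
  qed
  ultimately show ?thesis unfolding is_tiling_def by blast
qed

lemma valid_flips_tiling:
  assumes T: "is_tiling R T" and v: "valid_flips T D1 D2 s" and i: "i \<le> s"
  shows "is_tiling R (flip_seq T D1 D2 i)"
  using i
proof (induction i)
  case (Suc i)
  then have "Suc i \<in> {1..s}" by simp
  then have "flip_move (flip_seq T D1 D2 i) (D1 (Suc i)) (D2 (Suc i))"
    using v unfolding valid_flips_def by fastforce
  then show ?case using is_tiling_flip Suc by simp
qed (use T in simp)

definition seq_cons :: "'a \<Rightarrow> (nat \<Rightarrow> 'a) \<Rightarrow> nat \<Rightarrow> 'a" where
  "seq_cons A f k = (if k \<le> 1 then A else f (k - 1))"

lemma flip_seq_cons:
  "flip_seq T (seq_cons A D1) (seq_cons B D2) (Suc i) = flip_seq ((T - A) \<union> B) D1 D2 i"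
  by (induction i) (auto simp: seq_cons_def)

lemma valid_flips_cons:
  assumes "flip_move T A B" "valid_flips ((T - A) \<union> B) D1 D2 s"
  shows "valid_flips T (seq_cons A D1) (seq_cons B D2) (Suc s)"
  unfolding valid_flips_def
proof
  fix i assume i: "i \<in> {1..Suc s}"
  show "flip_move (flip_seq T (seq_cons A D1) (seq_cons B D2) (i - 1)) (seq_cons A D1 i) (seq_cons B D2 i)"
  proof (cases "i = 1")
    case True then show ?thesis using assms(1) by (simp add: seq_cons_def)
  next
    case False
    then obtain k where k: "i = Suc (Suc k)" "Suc k \<in> {1..s}" using i by (cases i; cases "i - 1") auto
    then have "flip_move (flip_seq ((T - A) \<union> B) D1 D2 (Suc k - 1)) (D1 (Suc k)) (D2 (Suc k))"
      using assms(2) unfolding valid_flips_def by blast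
    then show ?thesis using k(1) by (simp only: diff_Suc_1 flip_seq_cons) (simp add: seq_cons_def)
  qed
qed

section \<open>Flips that lower the height difference\<close>

lemma height_diff_form_nonneg: "height_form T1 a b > 0 \<Longrightarrow> height_diff_form T1 T2 a b \<ge> 0"
  unfolding height_diff_form_def height_form_def square_sign_def by (auto split: if_splits)

lemma height_form_toggle:
  assumes "height_form T a b \<le> 0"
    and "{left_square a b, right_square a b} \<in> T' \<longleftrightarrow> {left_square a b, right_square a b} \<notin> T"
  shows "height_form T' a b = height_form T a b + 4"
  using assms unfolding height_form_def square_sign_def by (auto split: if_splits)

lemma block_domino_crossed_at_centre:
  assumes ab: "adjacent a b"
    and "{left_square a b, right_square a b} \<in> hdom (i - 1) (j - 1) \<union> vdom (i - 1) (j - 1)"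
  shows "a = (i, j) \<or> b = (i, j)"
  using ab assms(2)
  by (cases rule: adjacentE)
    (auto simp: left_square_steps right_square_steps hdom_def vdom_def doubleton_eq_iff)

lemma centre_edge_crosses_block_domino:
  assumes "adjacent (i, j) b"
  shows "{left_square (i, j) b, right_square (i, j) b} \<in> hdom (i - 1) (j - 1) \<union> vdom (i - 1) (j - 1)"
  using assms
  by (cases rule: adjacentE)
    (auto simp: left_square_steps right_square_steps hdom_def vdom_def doubleton_eq_iff)

lemma height_form_flip:
  assumes T: "is_tiling R T" and f: "flip_move T D1 D2"
    and D: "D1 \<union> D2 = hdom (i - 1) (j - 1) \<union> vdom (i - 1) (j - 1)"
    and no_ascent: "\<And>w. adjacent (i, j) w \<Longrightarrow> height_form T (i, j) w \<le> 0"
    and ab: "adjacent a b"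
  shows "height_form ((T - D1) \<union> D2) a b
    = height_form T a b + (if a = (i, j) then 4 else 0) - (if b = (i, j) then 4 else 0)"
proof -
  let ?T' = "(T - D1) \<union> D2"
  have toggle: "P \<in> ?T' \<longleftrightarrow> P \<notin> T" if "P \<in> D1 \<union> D2" for P
    using that flip_move_disjoint[OF T f] f unfolding flip_move_def by blast
  have centre: "height_form ?T' (i, j) w = height_form T (i, j) w + 4" if "adjacent (i, j) w" for w
    by (rule height_form_toggle[OF no_ascent[OF that]])
      (use toggle centre_edge_crosses_block_domino[OF that] D in blast)
  consider "a = (i, j)" | "b = (i, j)" | "a \<noteq> (i, j)" "b \<noteq> (i, j)" by blast
  then show ?thesis
  proof cases
    case 1
    moreover have "b \<noteq> a" using ab by (auto simp: adjacent_def)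
    ultimately show ?thesis using centre ab by auto
  next
    case 2
    then have "adjacent (i, j) a" "a \<noteq> b" using ab adjacent_sym by (auto simp: adjacent_def)
    then show ?thesis
      using centre height_form_swap[OF ab, of ?T'] height_form_swap[OF ab, of T] 2 by simp
  next
    case 3
    then have "{left_square a b, right_square a b} \<notin> D1 \<union> D2"
      using block_domino_crossed_at_centre[OF ab] D by blast
    then show ?thesis using 3 unfolding height_form_def by simp
  qed
qed

text \<open>If all four edges at corner \<open>(i, j)\<close> descend, the colours of the surrounding squares force
  two of these edges to cross parallel dominoes, which together tile the block around the corner.\<close>

lemma flip_at_corner_without_ascent:
  assumes no_ascent: "\<And>w. adjacent (i, j) w \<Longrightarrow> height_form T (i, j) w \<le> 0"
  obtains D1 D2 where "flip_move T D1 D2" "D1 \<union> D2 = hdom (i - 1) (j - 1) \<union> vdom (i - 1) (j - 1)"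
proof -
  have E: "height_form T (i, j) (i + 1, j) \<le> 0" and N: "height_form T (i, j) (i, j + 1) \<le> 0"
    and W: "height_form T (i, j) (i - 1, j) \<le> 0" and S: "height_form T (i, j) (i, j - 1) \<le> 0"
    using no_ascent by (auto simp: adjacent_def)
  show ?thesis
  proof (cases "even (i + j)")
    case True
    have "{(i, j), (i, j - 1)} \<in> T" "{(i - 1, j - 1), (i - 1, j)} \<in> T"
      using E W True unfolding height_form_def square_sign_def
      by (simp_all add: left_square_steps right_square_steps split: if_splits)
    then have "vdom (i - 1) (j - 1) \<subseteq> T" unfolding vdom_def by (auto simp: insert_commute)
    then show ?thesis using that[of "vdom (i - 1) (j - 1)" "hdom (i - 1) (j - 1)"]
      unfolding flip_move_def by blast
  next
    case False
    have "{(i - 1, j), (i, j)} \<in> T" "{(i, j - 1), (i - 1, j - 1)} \<in> T"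
      using N S False unfolding height_form_def square_sign_def
      by (simp_all add: left_square_steps right_square_steps split: if_splits)
    then have "hdom (i - 1) (j - 1) \<subseteq> T" unfolding hdom_def by (auto simp: insert_commute)
    then show ?thesis using that[of "hdom (i - 1) (j - 1)" "vdom (i - 1) (j - 1)"]
      unfolding flip_move_def by blast
  qed
qed

lemma const_on_lattice:
  assumes "\<And>a b. adjacent a b \<Longrightarrow> h b = (h a :: 'a)"
  shows "h u = h u0"
proof -
  have row: "h (x, y) = h (x0, y)" for x x0 y
  proof (induction x rule: int_induct[where k = x0])
    case (step1 i) then show ?case using assms[of "(i, y)" "(i + 1, y)"] by (simp add: adjacent_def)
  next
    case (step2 i) then show ?case using assms[of "(i, y)" "(i - 1, y)"] by (simp add: adjacent_def)
  qed simp
  have column: "h (x, y) = h (x, y0)" for x y y0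
  proof (induction y rule: int_induct[where k = y0])
    case (step1 i) then show ?case using assms[of "(x, i)" "(x, i + 1)"] by (simp add: adjacent_def)
  next
    case (step2 i) then show ?case using assms[of "(x, i)" "(x, i - 1)"] by (simp add: adjacent_def)
  qed simp
  show ?thesis using row column by (metis prod.collapse)
qed

lemma lattice_potential_unique:
  assumes "\<And>a b. adjacent a b \<Longrightarrow> f b - f a = g b - (g a :: 'a::ab_group_add)"
  shows "f u - g u = f u0 - g u0"
  by (rule const_on_lattice) (use assms in \<open>simp add: algebra_simps\<close>)

lemma height_diff_flip:
  assumes fin: "finite R" and T1: "is_tiling R T1" and T2: "is_tiling R T2"
    and f: "flip_move T1 D1 D2" and D: "D1 \<union> D2 = hdom (i - 1) (j - 1) \<union> vdom (i - 1) (j - 1)"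
    and no_ascent: "\<And>w. adjacent (i, j) w \<Longrightarrow> height_form T1 (i, j) w \<le> 0"
    and inside: "(i - 1, j - 1) \<in> R"
  shows "height_diff R ((T1 - D1) \<union> D2) T2 u = height_diff R T1 T2 u - (if u = (i, j) then 4 else 0)"
proof -
  let ?T1' = "(T1 - D1) \<union> D2" and ?d = "height_diff R T1 T2"
  define g where "g u = ?d u - (if u = (i, j) then 4 else 0)" for u
  have T1': "is_tiling R ?T1'" by (rule is_tiling_flip[OF T1 f])
  have "height_diff R ?T1' T2 b - height_diff R ?T1' T2 a = g b - g a" if ab: "adjacent a b" for a b
    using height_diff_step[OF T1' T2 ab] height_diff_step[OF T1 T2 ab]
      height_form_flip[OF T1 f D no_ascent ab]
    unfolding height_diff_form_def g_def by simp
  then have "height_diff R ?T1' T2 u - g u = height_diff R ?T1' T2 (- region_bound R, 0) - g (- region_bound R, 0)"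
    by (rule lattice_potential_unique)
  moreover have "(- region_bound R, 0) \<noteq> (i, j)"
    using region_bound(1)[OF fin inside] by auto
  then have "height_diff R ?T1' T2 (- region_bound R, 0) - g (- region_bound R, 0) = 0"
    using height_diff_left[OF fin T1' T2] height_diff_left[OF fin T1 T2] unfolding g_def by simp
  ultimately show ?thesis unfolding g_def by simp
qed

definition height_box :: "square set \<Rightarrow> corner set" where
  "height_box R = {- region_bound R .. region_bound R} \<times> {- region_bound R .. region_bound R}"

lemma finite_height_box [simp]: "finite (height_box R)"
  unfolding height_box_def by simp

definition height_distance :: "square set \<Rightarrow> edge set \<Rightarrow> edge set \<Rightarrow> int" where
  "height_distance R T1 T2 = (\<Sum>u\<in>height_box R. \<bar>height_diff R T1 T2 u\<bar>)"

lemma height_distance_sym: "height_distance R T1 T2 = height_distance R T2 T1"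
  unfolding height_distance_def by (simp add: height_diff_swap[of R T1 T2])

lemma height_distance_nonneg: "height_distance R T1 T2 \<ge> 0"
  unfolding height_distance_def by (simp add: sum_nonneg)

lemma height_diff_support:
  assumes "simply_connected_region R" "is_tiling R T1" "is_tiling R T2"
    and "height_diff R T1 T2 v \<noteq> 0"
  shows "v \<in> height_box R"
proof -
  have fin: "finite R" using assms(1) simply_connected_region_def by blast
  obtain i j where v: "v = (i, j)" by fastforce
  then have "(i, j) \<in> R" using height_diff_nonzero_interior[OF assms(1-3)] assms(4) by auto
  from region_bound[OF fin this] show ?thesis unfolding height_box_def v by (simp add: abs_le_iff)
qed

text \<open>A closed walk on which the height difference is constant and nonzero visits only corners
  of squares of the region; it therefore winds around no square outside the region, and these
  are the only squares where the curl of \<^const>\<open>height_form\<close> may be nonzero.\<close>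

lemma level_walk_height_form_sum:
  assumes sc: "simply_connected_region R" and T1: "is_tiling R T1" and T2: "is_tiling R T2"
    and M: "M \<noteq> 0" and q: "lattice_walk q n" "q n = q 0"
    and level: "\<And>k. k \<le> n \<Longrightarrow> height_diff R T1 T2 (q k) = M"
  shows "(\<Sum>k<n. height_form T1 (q k) (q (Suc k))) = 0"
proof -
  define B where "B = region_bound R"
  have fin: "finite R" using sc simply_connected_region_def by blast
  have B: "0 \<le> B" using region_bound_nonneg[OF fin] unfolding B_def .
  have qb: "walk_bounded B q n"
    unfolding walk_bounded_def
  proof (intro allI impI)
    fix k assume "k \<le> n"
    then have "q k \<in> height_box R" using height_diff_support[OF sc T1 T2] level M by simp
    then show "\<bar>fst (q k)\<bar> \<le> B \<and> \<bar>snd (q k)\<bar> \<le> B"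
      unfolding height_box_def B_def by (cases "q k") (simp add: abs_le_iff)
  qed
  have avoid: "q k \<notin> corners c" if "k \<le> n" "c \<notin> R" for k c
  proof
    assume "q k \<in> corners c"
    then have "height_diff R T1 T2 (q k) = 0" by (rule height_diff_outer_corner[OF sc T1 T2 that(2)])
    then show False using level[OF that(1)] M by simp
  qed
  have "(\<Sum>k<n. height_form T1 (q k) (q (Suc k))) =
      (\<Sum>c\<in>square_box B. of_int (walk_winding 0 q n c) * curl (height_form T1) c)"
    by (rule closed_walk_sum_eq_winding[OF antisym_height_form q _ qb]) (use B in simp)
  also have "\<dots> = 0"
    using curl_height_form[OF T1] walk_winding_outer_square[OF sc q B qb avoid]
    by (intro sum.neutral ballI) (metis mult_eq_0_iff of_int_0)
  finally show ?thesis .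
qed

lemma finite_successor_cycle:
  assumes fin: "finite S" and v0: "v0 \<in> S"
    and next_in: "\<And>v. v \<in> S \<Longrightarrow> nx v \<in> S \<and> P v (nx v)"
  shows "\<exists>q n. n > 0 \<and> q n = q 0 \<and> (\<forall>k<n. P (q k) (q (Suc k))) \<and> (\<forall>k\<le>n. q k \<in> S)"
proof -
  define p where "p i = (nx ^^ i) v0" for i
  have pS: "p i \<in> S" for i by (induction i) (auto simp: p_def next_in v0)
  have p_Suc: "p (Suc i) = nx (p i)" for i by (simp add: p_def)
  have "card (p ` {..card S}) \<le> card S" using fin pS by (intro card_mono) auto
  then have "\<not> inj_on p {..card S}" by (metis Suc_n_not_le_n card_atMost card_image)
  then obtain i j where ij: "i < j" "p i = p j"
    unfolding inj_on_def by (metis linorder_neqE_nat)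
  define q where "q k = p (i + k)" for k
  show ?thesis
  proof (intro exI[of _ q] exI[of _ "j - i"] conjI allI impI)
    show "0 < j - i" "q (j - i) = q 0" using ij by (simp_all add: q_def)
    fix k show "P (q k) (q (Suc k))" using next_in[OF pS] p_Suc unfolding q_def by (metis add_Suc_right)
  next
    fix k show "q k \<in> S" using pS unfolding q_def by blast
  qed
qed

text \<open>At a corner where \<open>h\<^sub>T\<^sub>1 - h\<^sub>T\<^sub>2\<close> attains its maximum, no edge ascends for \<open>T1\<close>: otherwise
  following ascending edges within the maximum level set would produce a closed walk with positive
  total increment, contradicting \<open>level_walk_height_form_sum\<close>.\<close>

lemma maximum_level_without_ascent:
  assumes sc: "simply_connected_region R" and T1: "is_tiling R T1" and T2: "is_tiling R T2"
    and max: "\<And>u. height_diff R T1 T2 u \<le> M" and v1: "height_diff R T1 T2 v1 = M" and M: "M \<noteq> 0"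
  obtains v where "height_diff R T1 T2 v = M" "\<And>w. adjacent v w \<Longrightarrow> height_form T1 v w \<le> 0"
proof -
  define S where "S = {u. height_diff R T1 T2 u = M}"
  have finS: "finite S"
    using height_diff_support[OF sc T1 T2] M
    by (intro finite_subset[OF _ finite_height_box[of R]]) (auto simp: S_def)
  have "\<exists>v\<in>S. \<forall>w. adjacent v w \<longrightarrow> height_form T1 v w \<le> 0"
  proof (rule ccontr)
    assume "\<not> ?thesis"
    then obtain nx where nx: "\<And>v. v \<in> S \<Longrightarrow> adjacent v (nx v) \<and> height_form T1 v (nx v) > 0"
      by (metis not_le)
    have nx_S: "nx v \<in> S" if v: "v \<in> S" for v
    proof -
      have "height_diff R T1 T2 (nx v) - height_diff R T1 T2 v \<ge> 0"
        using height_diff_step[OF T1 T2] height_diff_form_nonneg nx[OF v] by metis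
      then show ?thesis using max[of "nx v"] v unfolding S_def by simp
    qed
    have "v1 \<in> S" using v1 unfolding S_def by simp
    then obtain q n where q: "n > 0" "q n = q 0" "\<forall>k<n. adjacent (q k) (q (Suc k))"
      "\<forall>k<n. height_form T1 (q k) (q (Suc k)) > 0" "\<forall>k\<le>n. q k \<in> S"
      using finite_successor_cycle[OF finS, of v1 nx "\<lambda>a b. adjacent a b \<and> height_form T1 a b > 0"]
        nx nx_S by blast
    have "(\<Sum>k<n. height_form T1 (q k) (q (Suc k))) = 0"
      using level_walk_height_form_sum[OF sc T1 T2 M, of q n] q unfolding lattice_walk_def S_def by simp
    moreover have "(\<Sum>k<n. height_form T1 (q k) (q (Suc k))) > 0"
      using q(1,4) by (intro sum_pos) auto
    ultimately show False by simp
  qed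
  then show ?thesis using that unfolding S_def by blast
qed

lemma maximum_without_ascent:
  assumes sc: "simply_connected_region R" and T1: "is_tiling R T1" and T2: "is_tiling R T2"
    and v0: "height_diff R T1 T2 v0 > 0"
  obtains v where "\<And>u. height_diff R T1 T2 u \<le> height_diff R T1 T2 v" "height_diff R T1 T2 v > 0"
    "\<And>w. adjacent v w \<Longrightarrow> height_form T1 v w \<le> 0"
proof -
  define d where "d = height_diff R T1 T2"
  define M where "M = Max (d ` height_box R)"
  have v0_box: "v0 \<in> height_box R" by (rule height_diff_support[OF sc T1 T2]) (use v0 in simp)
  have d_le: "d u \<le> M" for u
  proof (cases "u \<in> height_box R")
    case False
    then have "d u = 0" using height_diff_support[OF sc T1 T2] unfolding d_def by blast
    moreover have "d v0 \<le> M" using v0_box unfolding M_def by simp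
    ultimately show ?thesis using v0 unfolding d_def by simp
  qed (simp add: M_def)
  have M_pos: "M > 0" using d_le[of v0] v0 unfolding d_def by simp
  have "M \<in> d ` height_box R" unfolding M_def using v0_box by (intro Max_in) auto
  then obtain v1 where v1: "height_diff R T1 T2 v1 = M" unfolding d_def by auto
  obtain v where v: "height_diff R T1 T2 v = M" "\<And>w. adjacent v w \<Longrightarrow> height_form T1 v w \<le> 0"
    by (rule maximum_level_without_ascent[OF sc T1 T2 _ v1]) (use d_le M_pos in \<open>simp_all add: d_def\<close>)
  show ?thesis by (rule that[of v]) (use v d_le M_pos in \<open>simp_all add: d_def\<close>)
qed

lemma flip_decreases_height_distance:
  assumes sc: "simply_connected_region R" and T1: "is_tiling R T1" and T2: "is_tiling R T2"
    and v0: "height_diff R T1 T2 v0 > 0"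
  obtains D1 D2 where "flip_move T1 D1 D2"
    "height_distance R ((T1 - D1) \<union> D2) T2 < height_distance R T1 T2"
proof -
  have fin: "finite R" using sc simply_connected_region_def by blast
  let ?d = "height_diff R T1 T2"
  obtain i j where max: "\<And>u. ?d u \<le> ?d (i, j)" and pos: "?d (i, j) > 0"
    and no_ascent: "\<And>w. adjacent (i, j) w \<Longrightarrow> height_form T1 (i, j) w \<le> 0"
    using maximum_without_ascent[OF sc T1 T2 v0] by (metis surj_pair)
  obtain D1 D2 where f: "flip_move T1 D1 D2"
    and D: "D1 \<union> D2 = hdom (i - 1) (j - 1) \<union> vdom (i - 1) (j - 1)"
    using flip_at_corner_without_ascent[OF no_ascent] by blast
  have inside: "(i - 1, j - 1) \<in> R" using height_diff_nonzero_interior[OF sc T1 T2] pos by simp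
  note flipped = height_diff_flip[OF fin T1 T2 f D no_ascent inside]
  have "4 dvd ?d (i, j)" by (rule four_dvd_height_diff)
  then have four: "?d (i, j) \<ge> 4" using pos by (auto elim!: dvdE)
  have ij: "(i, j) \<in> height_box R" using height_diff_support[OF sc T1 T2] pos by simp
  have "(\<Sum>u\<in>height_box R - {(i, j)}. \<bar>height_diff R ((T1 - D1) \<union> D2) T2 u\<bar>)
      = (\<Sum>u\<in>height_box R - {(i, j)}. \<bar>?d u\<bar>)"
    by (intro sum.cong) (simp_all add: flipped)
  then have "height_distance R ((T1 - D1) \<union> D2) T2
      = \<bar>?d (i, j) - 4\<bar> + (\<Sum>u\<in>height_box R - {(i, j)}. \<bar>?d u\<bar>)"
    unfolding height_distance_def using ij by (simp add: sum.remove flipped)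
  also have "\<dots> = height_distance R T1 T2 - 4"
  proof -
    have "height_distance R T1 T2 = \<bar>?d (i, j)\<bar> + (\<Sum>u\<in>height_box R - {(i, j)}. \<bar>?d u\<bar>)"
      unfolding height_distance_def using ij by (simp add: sum.remove)
    then show ?thesis using four by simp
  qed
  finally show ?thesis using that f by simp
qed

lemma edge_between_adjacent_squares:
  assumes "adjacent p q"
  obtains a b where "adjacent a b" "left_square a b = p" "right_square a b = q"
  using assms
proof (cases rule: adjacentE)
  case (1 x y)
  then show ?thesis using that[of "(x + 1, y)" "(x + 1, y + 1)"]
    by (simp add: left_square_def right_square_def adjacent_def)
next
  case (2 x y)
  then show ?thesis using that[of "(x, y + 1)" "(x, y)"]
    by (simp add: left_square_def right_square_def adjacent_def)
next
  case (3 x y)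
  then show ?thesis using that[of "(x + 1, y + 1)" "(x, y + 1)"]
    by (simp add: left_square_def right_square_def adjacent_def)
next
  case (4 x y)
  then show ?thesis using that[of "(x, y)" "(x + 1, y)"]
    by (simp add: left_square_def right_square_def adjacent_def)
qed

lemma tilings_differ_height_diff:
  assumes T1: "is_tiling R T1" and T2: "is_tiling R T2" and ne: "T1 \<noteq> T2"
  obtains v where "height_diff R T1 T2 v \<noteq> 0"
proof -
  obtain e where e: "e \<in> T1 \<union> T2" "e \<notin> T1 \<or> e \<notin> T2" using ne by blast
  then have "e \<in> grid_edges R" using T1 T2 unfolding is_tiling_def by blast
  then obtain p q where pq: "e = {p, q}" "adjacent p q" unfolding grid_edges_def by blast
  obtain a b where ab: "adjacent a b" "left_square a b = p" "right_square a b = q"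
    using edge_between_adjacent_squares[OF pq(2)] by blast
  have "height_diff_form T1 T2 a b \<noteq> 0"
    using e pq ab unfolding height_diff_form_def height_form_def square_sign_def by auto
  then have "height_diff R T1 T2 b - height_diff R T1 T2 a \<noteq> 0"
    using height_diff_step[OF T1 T2 ab(1)] by simp
  then show ?thesis using that by (cases "height_diff R T1 T2 b = 0") auto
qed

definition flips_meet :: "edge set \<Rightarrow> edge set \<Rightarrow> bool" where
  "flips_meet T1 T2 \<longleftrightarrow> (\<exists>s D1 D2 t D1' D2'. valid_flips T1 D1 D2 s \<and> valid_flips T2 D1' D2' t \<and>
     flip_seq T1 D1 D2 s = flip_seq T2 D1' D2' t)"

lemma flips_meet_refl: "flips_meet T T"
proof -
  have "valid_flips T D D 0" for D by (simp add: valid_flips_def)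
  then show ?thesis unfolding flips_meet_def by (metis flip_seq.simps(1))
qed

lemma flips_meet_sym: "flips_meet T1 T2 \<Longrightarrow> flips_meet T2 T1"
  unfolding flips_meet_def by metis

lemma flips_meet_flip: "flip_move T A B \<Longrightarrow> flips_meet ((T - A) \<union> B) T' \<Longrightarrow> flips_meet T T'"
  unfolding flips_meet_def by (metis valid_flips_cons flip_seq_cons)

lemma flips_meet_tilings:
  assumes sc: "simply_connected_region R"
  shows "is_tiling R T1 \<Longrightarrow> is_tiling R T2 \<Longrightarrow> flips_meet T1 T2"
proof (induction "nat (height_distance R T1 T2)" arbitrary: T1 T2 rule: less_induct)
  case less
  show ?case
  proof (cases "T1 = T2")
    case True then show ?thesis by (simp add: flips_meet_refl)
  next
    case False
    then obtain v where v: "height_diff R T1 T2 v \<noteq> 0"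
      using tilings_differ_height_diff[OF less.prems] by blast
    have flip_first: "flips_meet T T'"
      if T: "is_tiling R T" "is_tiling R T'" and pos: "height_diff R T T' v > 0"
        and dist: "height_distance R T T' = height_distance R T1 T2" for T T'
    proof -
      obtain A B where f: "flip_move T A B"
        and lt: "height_distance R ((T - A) \<union> B) T' < height_distance R T T'"
        using flip_decreases_height_distance[OF sc T pos] by blast
      have "nat (height_distance R ((T - A) \<union> B) T') < nat (height_distance R T1 T2)"
        using lt dist height_distance_nonneg[of R "(T - A) \<union> B" T'] by simp
      then have "flips_meet ((T - A) \<union> B) T'"
        using less.hyps is_tiling_flip[OF T(1) f] T(2) by blast
      then show ?thesis by (rule flips_meet_flip[OF f])
    qed
    show ?thesis
    proof (cases "height_diff R T1 T2 v > 0")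
      case True then show ?thesis using flip_first less.prems by blast
    next
      case False
      then have "height_diff R T2 T1 v > 0" using v height_diff_swap[of R T1 T2] by simp
      then show ?thesis
        using flip_first[of T2 T1] less.prems height_distance_sym flips_meet_sym by metis
    qed
  qed
qed

section \<open>Contractibility and the binomial identity\<close>

lemma contractible_cycle_same_tiling:
  assumes T: "is_tiling R T" and V: "V \<in> union_cycles R T T"
  shows "contractible_cycle R (T \<union> T) V"
proof -
  obtain p where p: "p \<in> R" "V = comp_of T p" using V unfolding union_cycles_def by auto
  obtain q where q: "{p, q} \<in> T" "\<And>e. e \<in> T \<Longrightarrow> p \<in> e \<Longrightarrow> e = {p, q}"
    using tiling_partner[OF T p(1)] by blast
  have V_sub: "V \<subseteq> {p, q}"
  proof
    fix x assume "x \<in> V"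
    then have "(\<lambda>a b. {a, b} \<in> T)\<^sup>*\<^sup>* p x" using p unfolding comp_of_def by simp
    then show "x \<in> {p, q}"
    proof (induction rule: rtranclp_induct)
      case (step y z)
      then have "{y, z} = {p, q}" using is_tiling_unique[OF T step(2) q(1)] by blast
      then show ?case by auto
    qed simp
  qed
  have "X = closed_segment (center p) (center q)"
    if X: "X \<in> {closed_segment (center a) (center b) | a b. {a, b} \<in> T \<union> T \<and> a \<in> V \<and> b \<in> V}" for X
  proof -
    obtain a b where ab: "X = closed_segment (center a) (center b)" "{a, b} \<in> T" "a \<in> V" "b \<in> V"
      using X by blast
    have "a \<noteq> b" using tiling_edge(3)[OF T ab(2)] by (auto simp: adjacent_def)
    then have "(a = p \<and> b = q) \<or> (a = q \<and> b = p)" using ab V_sub by auto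
    then show ?thesis using ab(1) by (auto simp: closed_segment_commute)
  qed
  then have "drawing (T \<union> T) V = closed_segment (center p) (center q) \<or> drawing (T \<union> T) V = {}"
    unfolding drawing_def by blast
  then have "cycle_interior (T \<union> T) V = {}"
    unfolding cycle_interior_def using inside_convex by fastforce
  then show ?thesis unfolding contractible_cycle_def by simp
qed

lemma finite_grid_edges: "finite R \<Longrightarrow> finite (grid_edges R)"
proof -
  assume "finite R"
  moreover have "grid_edges R \<subseteq> (\<lambda>(p, q). {p, q}) ` (R \<times> R)" unfolding grid_edges_def by auto
  ultimately show ?thesis by (meson finite_SigmaI finite_imageI finite_subset)
qed

lemma ymon_flip:
  assumes fin: "finite R" and T: "is_tiling R T" and f: "flip_move T D1 D2"
  shows "(ymon T :: 'k::field epoly) - ymon ((T - D1) \<union> D2) = ymon (T - D1) * (ymon D1 - ymon D2)"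
proof -
  have fin_T: "finite T" using T finite_grid_edges[OF fin] finite_subset unfolding is_tiling_def by blast
  have fin_D: "finite D1" "finite D2" using f unfolding flip_move_def hdom_def vdom_def by auto
  have "D1 \<subseteq> T" using f unfolding flip_move_def by blast
  then have "(ymon T :: 'k epoly) = ymon (T - D1) * ymon D1"
    unfolding ymon_def by (rule prod.subset_diff[OF _ fin_T])
  moreover have "(ymon ((T - D1) \<union> D2) :: 'k epoly) = ymon (T - D1) * ymon D2"
    unfolding ymon_def using fin_T fin_D flip_move_disjoint[OF T f]
    by (subst prod.union_disjoint) auto
  ultimately show ?thesis by (simp add: right_diff_distrib)
qed

lemma sum_flip_binomials:
  assumes fin: "finite R" and T: "is_tiling R T" and v: "valid_flips T D1 D2 s"
  shows "(\<Sum>i=1..s. ymon (flip_seq T D1 D2 (i - 1) - D1 i) * (ymon (D1 i) - ymon (D2 i)))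
     = (ymon T :: 'k::field epoly) - ymon (flip_seq T D1 D2 s)"
proof -
  let ?P = "\<lambda>i. ymon (flip_seq T D1 D2 i) :: 'k epoly"
  have "(\<Sum>i=1..s. ymon (flip_seq T D1 D2 (i - 1) - D1 i) * (ymon (D1 i) - ymon (D2 i)))
      = (\<Sum>i=1..s. ?P (i - 1) - ?P i)"
  proof (intro sum.cong refl)
    fix i assume i: "i \<in> {1..s}"
    then have "flip_move (flip_seq T D1 D2 (i - 1)) (D1 i) (D2 i)" using v unfolding valid_flips_def by blast
    moreover have "is_tiling R (flip_seq T D1 D2 (i - 1))" using i by (intro valid_flips_tiling[OF T v]) auto
    moreover have "flip_seq T D1 D2 i = (flip_seq T D1 D2 (i - 1) - D1 i) \<union> D2 i"
      using i by (cases i) auto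
    ultimately show "ymon (flip_seq T D1 D2 (i - 1) - D1 i) * (ymon (D1 i) - ymon (D2 i)) = ?P (i - 1) - ?P i"
      using ymon_flip[OF fin] by metis
  qed
  also have "\<dots> = (\<Sum>i<s. ?P i - ?P (Suc i))"
    using sum.atLeast1_atMost_eq[of "\<lambda>i. ?P (i - 1) - ?P i" s] by simp
  also have "\<dots> = ?P 0 - ?P s" by (rule sum_lessThan_telescope')
  finally show ?thesis by simp
qed

lemma Bpoly_flip_decomposition:
  assumes "finite R" "is_tiling R T1" "is_tiling R T2"
    and "valid_flips T1 D1 D2 s" "valid_flips T2 D1' D2' t"
  shows "(Bpoly T1 T2 :: 'k::field epoly) =
        (\<Sum>i=1..s. ymon (flip_seq T1 D1 D2 (i - 1) - D1 i) * (ymon (D1 i) - ymon (D2 i)))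
        + Bpoly (flip_seq T1 D1 D2 s) (flip_seq T2 D1' D2' t)
        + (\<Sum>j=1..t. ymon (flip_seq T2 D1' D2' (j - 1) - D1' j) * (ymon (D2' j) - ymon (D1' j)))"
proof -
  have "(\<Sum>j=1..t. ymon (flip_seq T2 D1' D2' (j - 1) - D1' j) * (ymon (D2' j) - ymon (D1' j)))
      = - (\<Sum>j=1..t. (ymon (flip_seq T2 D1' D2' (j - 1) - D1' j) :: 'k epoly) * (ymon (D1' j) - ymon (D2' j)))"
    by (simp add: sum_negf[symmetric] right_diff_distrib)
  then show ?thesis
    using sum_flip_binomials[OF assms(1,2,4), where 'k = 'k] sum_flip_binomials[OF assms(1,3,5), where 'k = 'k]
    unfolding Bpoly_def by simp
qed

definition two_edge_monomial :: "edge \<Rightarrow> edge \<Rightarrow> edge \<Rightarrow>\<^sub>0 nat" where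
  "two_edge_monomial e1 e2 = Poly_Mapping.single e1 1 + Poly_Mapping.single e2 1"

lemma ymon_doubleton:
  "e1 \<noteq> e2 \<Longrightarrow> (ymon {e1, e2} :: 'k::field epoly) = Poly_Mapping.single (two_edge_monomial e1 e2) 1"
  unfolding ymon_def yvar_def two_edge_monomial_def by (simp add: mult_single)

lemma lookup_two_edge_monomial:
  "e1 \<noteq> e2 \<Longrightarrow> Poly_Mapping.lookup (two_edge_monomial e1 e2) e = (if e = e1 \<or> e = e2 then 1 else 0)"
  unfolding two_edge_monomial_def by (auto simp: lookup_add lookup_single when_def)

lemma mon_degree_two_edge_monomial: "e1 \<noteq> e2 \<Longrightarrow> mon_degree (two_edge_monomial e1 e2) = 2"
proof -
  assume ne: "e1 \<noteq> e2"
  then have "Poly_Mapping.keys (two_edge_monomial e1 e2) = {e1, e2}"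
    using lookup_two_edge_monomial[OF ne] by (auto simp: in_keys_iff split: if_splits)
  then show ?thesis unfolding mon_degree_def using ne by (simp add: lookup_two_edge_monomial)
qed

lemma has_degree_two_binomial:
  assumes ne: "e1 \<noteq> e2" "f1 \<noteq> f2" and dis: "e1 \<notin> {f1, f2}"
  shows "has_degree (ymon {e1, e2} - ymon {f1, f2} :: 'k::field epoly) 2"
proof -
  define m1 where "m1 = two_edge_monomial e1 e2"
  define m2 where "m2 = two_edge_monomial f1 f2"
  have "Poly_Mapping.lookup m1 e1 \<noteq> Poly_Mapping.lookup m2 e1"
    using lookup_two_edge_monomial[OF ne(1), of e1] lookup_two_edge_monomial[OF ne(2), of e1] dis
    unfolding m1_def m2_def by simp
  then have m12: "m1 \<noteq> m2" by auto
  have eq: "(ymon {e1, e2} - ymon {f1, f2} :: 'k epoly) = Poly_Mapping.single m1 1 - Poly_Mapping.single m2 1"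
    unfolding m1_def m2_def using ymon_doubleton ne by metis
  have "Poly_Mapping.lookup (Poly_Mapping.single m1 (1::'k) - Poly_Mapping.single m2 1) m1 = 1"
    using m12 by (simp add: lookup_minus lookup_single_not_eq)
  then have nz: "Poly_Mapping.single m1 (1::'k) - Poly_Mapping.single m2 1 \<noteq> 0" by auto
  have "Poly_Mapping.keys (Poly_Mapping.single m1 (1::'k) - Poly_Mapping.single m2 1) \<subseteq> {m1, m2}"
    by (auto simp: in_keys_iff lookup_minus lookup_single when_def split: if_splits)
  then show ?thesis unfolding has_degree_def eq
    using nz mon_degree_two_edge_monomial ne unfolding m1_def m2_def by blast
qed

lemma has_degree_flip:
  assumes "flip_move T D1 D2"
  shows "has_degree (ymon D1 - ymon D2 :: 'k::field epoly) 2" "has_degree (ymon D2 - ymon D1 :: 'k epoly) 2"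
proof -
  have "has_degree (ymon (hdom a b) - ymon (vdom a b) :: 'k epoly) 2"
       "has_degree (ymon (vdom a b) - ymon (hdom a b) :: 'k epoly) 2" for a b
    unfolding hdom_def vdom_def by (rule has_degree_two_binomial; auto simp: doubleton_eq_iff)+
  then show "has_degree (ymon D1 - ymon D2 :: 'k epoly) 2" "has_degree (ymon D2 - ymon D1 :: 'k epoly) 2"
    using assms unfolding flip_move_def by auto
qed

theorem mainTheorem9:
  fixes R :: "square set" and T1 T2 :: "edge set"
  assumes "simply_connected_region R"
    and "is_tiling R T1" and "is_tiling R T2"
    and "\<forall>V\<in>union_cycles R T1 T2. perimeter_cycle R T1 T2 V"
  shows "\<exists>s D1 D2 t D1' D2'.
     valid_flips T1 D1 D2 s \<and> valid_flips T2 D1' D2' t \<and>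
     is_tiling R (flip_seq T1 D1 D2 s) \<and> is_tiling R (flip_seq T2 D1' D2' t) \<and>
     (\<forall>V\<in>union_cycles R (flip_seq T1 D1 D2 s) (flip_seq T2 D1' D2' t).
        contractible_cycle R (flip_seq T1 D1 D2 s \<union> flip_seq T2 D1' D2' t) V) \<and>
     (Bpoly T1 T2 :: 'k::field epoly) =
        (\<Sum>i=1..s. ymon (flip_seq T1 D1 D2 (i - 1) - D1 i) * (ymon (D1 i) - ymon (D2 i)))
        + Bpoly (flip_seq T1 D1 D2 s) (flip_seq T2 D1' D2' t)
        + (\<Sum>j=1..t. ymon (flip_seq T2 D1' D2' (j - 1) - D1' j) * (ymon (D2' j) - ymon (D1' j))) \<and>
     (\<forall>i\<in>{1..s}. has_degree (ymon (D1 i) - ymon (D2 i) :: 'k epoly) 2) \<and>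
     (\<forall>j\<in>{1..t}. has_degree (ymon (D2' j) - ymon (D1' j) :: 'k epoly) 2)"
proof -
  note sc = assms(1) and T1 = assms(2) and T2 = assms(3)
  have fin: "finite R" using sc simply_connected_region_def by blast
  obtain s D1 D2 t D1' D2' where v1: "valid_flips T1 D1 D2 s" and v2: "valid_flips T2 D1' D2' t"
    and common: "flip_seq T1 D1 D2 s = flip_seq T2 D1' D2' t"
    using flips_meet_tilings[OF sc T1 T2] unfolding flips_meet_def by blast
  have P: "is_tiling R (flip_seq T1 D1 D2 s)" and Q: "is_tiling R (flip_seq T2 D1' D2' t)"
    using valid_flips_tiling[OF T1 v1] valid_flips_tiling[OF T2 v2] by simp_all
  have "\<forall>V\<in>union_cycles R (flip_seq T1 D1 D2 s) (flip_seq T2 D1' D2' t).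
      contractible_cycle R (flip_seq T1 D1 D2 s \<union> flip_seq T2 D1' D2' t) V"
    using contractible_cycle_same_tiling[OF P] common by simp
  moreover have "\<forall>i\<in>{1..s}. has_degree (ymon (D1 i) - ymon (D2 i) :: 'k epoly) 2"
    "\<forall>j\<in>{1..t}. has_degree (ymon (D2' j) - ymon (D1' j) :: 'k epoly) 2"
    using v1 v2 has_degree_flip unfolding valid_flips_def by blast+
  ultimately show ?thesis
    using v1 v2 P Q Bpoly_flip_decomposition[OF fin T1 T2 v1 v2, where 'k = 'k] by blast
qed

end
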